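(* Let $H$ be a separable complex Hilbert space, let $\mathbf A:\mathcal D(\mathbf A)\subset H\to H$ be the generator of an exponentially stable $C_0$-semigroup $\mathbf S(t)\in\mathscr L(H)$ with $\|\mathbf S(t)\|_{\mathscr L(H)}\le Me^{-\alpha t}$ for all $t\ge 0$ (with constants $M,\alpha>0$), and let $\mathbf Q,\mathbf G\in\mathscr L^s(H)$ be symmetric positive semi-definite. Let $\mathbf X\in\mathscr L^s(H)$ be the unique positive semi-definite solution of the Bochner integral equation $$\mathbf X=\int_0^{+\infty}\mathbf S(t)\big(\mathbf Q-\mathbf X\mathbf G\mathbf X\big)\mathbf S^*(t)\,dt .$$ Then $\mathbf X$ is the unique (symmetric positive semi-definite) solution of the strong operator-valued Riccati equation $$\mathbf A\mathbf X+\mathbf X\mathbf A^*-\mathbf X\mathbf G\mathbf X+\mathbf Q=\mathbf 0,$$ i.e. $\mathbf A\mathbf X+\mathbf X\mathbf A^*$ is defined on all of $H$, belongs to $\mathscr L^s(H)$, and the identity holds in $\mathscr L(H)$. Furthermore, if in addition $\mathbf Q\in\mathscr J_1^s(H)$, then $\mathbf X\in\mathscr J_1^s(H)$ and $$\|\mathbf X\|_1\le\frac{M^2}{2\alpha}\|\mathbf Q\|_1 .$$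
   Context: $\mathscr L(H)$ denotes bounded linear operators on $H$, $\mathscr L^s(H)$ the symmetric (self-adjoint) ones. A symmetric $\mathbf T$ is positive semi-definite if $(\phi,\mathbf T\phi)_H\ge0$ for all $\phi\in H$. $\mathscr J_1(H)$ is the space of trace-class operators on $H$, $\mathscr J_1^s(H)$ its symmetric elements, with trace norm $\|\cdot\|_1$ (for symmetric positive semi-definite $\mathbf T$, $\|\mathbf T\|_1=\operatorname{tr}(\mathbf T)=\sum_k(e_k,\mathbf Te_k)_H$ for any orthonormal basis $\{e_k\}$). $\mathbf S^*(t)$ is the adjoint semigroup, generated by $\mathbf A^*$. A $C_0$-semigroup is exponentially stable if $\|\mathbf S(t)\|\le Me^{-\alpha t}$ for some $M,\alpha>0$. The generators are $\mathbf A\phi=\lim_{h\to0^+}h^{-1}(\mathbf S(h)\phi-\phi)$ on its domain, and similarly for $\mathbf A^*$. *)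

theory Defs
  imports "HOL-Analysis.Analysis"
begin

class complex_vector = real_vector +
  fixes scaleC :: "complex \<Rightarrow> 'a \<Rightarrow> 'a"  (infixr \<open>*\<^sub>C\<close> 75)
  assumes scaleC_add_right: "a *\<^sub>C (x + y) = a *\<^sub>C x + a *\<^sub>C y"
    and scaleC_add_left: "(a + b) *\<^sub>C x = a *\<^sub>C x + b *\<^sub>C x"
    and scaleC_scaleC: "a *\<^sub>C (b *\<^sub>C x) = (a * b) *\<^sub>C x"
    and scaleC_one: "1 *\<^sub>C x = x"
    and scaleR_scaleC: "r *\<^sub>R x = complex_of_real r *\<^sub>C x"

class complex_inner = complex_vector + real_normed_vector +
  fixes cinner :: "'a \<Rightarrow> 'a \<Rightarrow> complex"
  assumes cinner_commute: "cinner x y = cnj (cinner y x)"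
    and cinner_add_left: "cinner (x + y) z = cinner x z + cinner y z"
    and cinner_scaleC_left: "cinner (r *\<^sub>C x) y = cnj r * cinner x y"
    and cinner_ge_zero: "0 \<le> Re (cinner x x)"
    and cinner_eq_zero_iff: "cinner x x = 0 \<longleftrightarrow> x = 0"
    and norm_eq_sqrt_cinner: "norm x = sqrt (Re (cinner x x))"

class chilbert_space = complex_inner + complete_space

instantiation complex :: chilbert_space
begin
definition scaleC_complex :: "complex \<Rightarrow> complex \<Rightarrow> complex" where "scaleC_complex a x = a * x"
definition cinner_complex :: "complex \<Rightarrow> complex \<Rightarrow> complex" where "cinner_complex x y = cnj x * y"
instance
proof
  fix a b x y z :: complex and r :: real
  show "a *\<^sub>C (x + y) = a *\<^sub>C x + a *\<^sub>C y" by (simp add: scaleC_complex_def algebra_simps)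
  show "(a + b) *\<^sub>C x = a *\<^sub>C x + b *\<^sub>C x" by (simp add: scaleC_complex_def algebra_simps)
  show "a *\<^sub>C (b *\<^sub>C x) = (a * b) *\<^sub>C x" by (simp add: scaleC_complex_def algebra_simps)
  show "1 *\<^sub>C x = x" by (simp add: scaleC_complex_def)
  show "r *\<^sub>R x = complex_of_real r *\<^sub>C x" by (simp add: scaleC_complex_def scaleR_conv_of_real)
  show "cinner x y = cnj (cinner y x)" by (simp add: cinner_complex_def)
  show "cinner (x + y) z = cinner x z + cinner y z" by (simp add: cinner_complex_def algebra_simps)
  show "cinner (a *\<^sub>C x) y = cnj a * cinner x y" by (simp add: cinner_complex_def scaleC_complex_def)
  show "0 \<le> Re (cinner x x)" by (simp add: cinner_complex_def)
  show "cinner x x = 0 \<longleftrightarrow> x = 0" by (simp add: cinner_complex_def)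
  show "norm x = sqrt (Re (cinner x x))"
    by (simp add: cinner_complex_def cmod_def power2_eq_square)
qed
end

definition clinear :: "('a::complex_vector \<Rightarrow> 'b::complex_vector) \<Rightarrow> bool" where
  "clinear T \<longleftrightarrow> (\<forall>x y. T (x + y) = T x + T y) \<and> (\<forall>c x. T (c *\<^sub>C x) = c *\<^sub>C T x)"

definition bounded_clinear :: "('a::complex_inner \<Rightarrow> 'b::complex_inner) \<Rightarrow> bool" where
  "bounded_clinear T \<longleftrightarrow> clinear T \<and> (\<exists>K. \<forall>x. norm (T x) \<le> norm x * K)"

definition cadjoint :: "('a::complex_inner \<Rightarrow> 'a) \<Rightarrow> 'a \<Rightarrow> 'a" where
  "cadjoint T = (\<lambda>y. THE z. \<forall>x. cinner (T x) y = cinner x z)"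

definition symmetric_op :: "('a::complex_inner \<Rightarrow> 'a) \<Rightarrow> bool" where
  "symmetric_op T \<longleftrightarrow> bounded_clinear T \<and> (\<forall>x y. cinner (T x) y = cinner x (T y))"

definition pos_semidef :: "('a::complex_inner \<Rightarrow> 'a) \<Rightarrow> bool" where
  "pos_semidef T \<longleftrightarrow> symmetric_op T \<and>
     (\<forall>\<phi>. cinner \<phi> (T \<phi>) \<in> \<real> \<and> 0 \<le> Re (cinner \<phi> (T \<phi>)))"

definition orthonormal_fam :: "nat \<Rightarrow> (nat \<Rightarrow> 'a::complex_inner) \<Rightarrow> bool" where
  "orthonormal_fam n e \<longleftrightarrow> (\<forall>i<n. \<forall>j<n. cinner (e i) (e j) = (if i = j then 1 else 0))"

definition trace_sums :: "('a::complex_inner \<Rightarrow> 'a) \<Rightarrow> real set" where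
  "trace_sums T = {(\<Sum>i<n. cmod (cinner (f i) (T (e i)))) | n e f.
                     orthonormal_fam n e \<and> orthonormal_fam n f}"

definition trace_class :: "('a::complex_inner \<Rightarrow> 'a) \<Rightarrow> bool" where
  "trace_class T \<longleftrightarrow> bounded_clinear T \<and> bdd_above (trace_sums T)"

definition trace_norm :: "('a::complex_inner \<Rightarrow> 'a) \<Rightarrow> real" where
  "trace_norm T = Sup (trace_sums T)"

definition c0_semigroup :: "(real \<Rightarrow> 'a::complex_inner \<Rightarrow> 'a) \<Rightarrow> bool" where
  "c0_semigroup S \<longleftrightarrow>
     (\<forall>t\<ge>0. bounded_clinear (S t)) \<and> S 0 = id \<and>
     (\<forall>t s. 0 \<le> t \<longrightarrow> 0 \<le> s \<longrightarrow> S (t + s) = S t \<circ> S s) \<and>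
     (\<forall>\<phi>. ((\<lambda>t. S t \<phi>) \<longlongrightarrow> \<phi>) (at_right 0))"

definition is_generator :: "(real \<Rightarrow> 'a::complex_inner \<Rightarrow> 'a) \<Rightarrow> 'a set \<Rightarrow> ('a \<Rightarrow> 'a) \<Rightarrow> bool" where
  "is_generator S D A \<longleftrightarrow>
     D = {\<phi>. \<exists>\<psi>. ((\<lambda>h. (1 / h) *\<^sub>R (S h \<phi> - \<phi>)) \<longlongrightarrow> \<psi>) (at_right 0)} \<and>
     (\<forall>\<phi>\<in>D. ((\<lambda>h. (1 / h) *\<^sub>R (S h \<phi> - \<phi>)) \<longlongrightarrow> A \<phi>) (at_right 0))"

text \<open>Bochner integral equation \<open>X = \<integral>\<^sub>0\<^sup>\<infinity> S(t)(Q - XGX)S\<^sup>*(t) dt\<close>, the integral being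
  understood in the strong sense (Bochner integral in \<open>H\<close> for each \<open>\<phi>\<close>).\<close>
definition riccati_integral_eq ::
  "(real \<Rightarrow> 'a::{chilbert_space, second_countable_topology} \<Rightarrow> 'a) \<Rightarrow> ('a \<Rightarrow> 'a) \<Rightarrow> ('a \<Rightarrow> 'a) \<Rightarrow> ('a \<Rightarrow> 'a) \<Rightarrow> bool" where
  "riccati_integral_eq S Q G X \<longleftrightarrow>
     (\<forall>\<phi>. has_bochner_integral (lebesgue_on {0..})
             (\<lambda>t. S t (Q (cadjoint (S t) \<phi>) - X (G (X (cadjoint (S t) \<phi>))))) (X \<phi>))"

text \<open>Strong Riccati equation \<open>AX + XA\<^sup>* - XGX + Q = 0\<close>: the operator \<open>AX + XA\<^sup>*\<close> is an element
  \<open>Z\<close> of \<open>\<L>\<^sup>s(H)\<close>, i.e. for every \<open>\<phi>\<in>H\<close>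
  \<open>Z \<phi> = lim\<^sub>h\<^sub>\<rightarrow>\<^sub>0\<^sub>+ h\<^sup>-\<^sup>1 (S(h) X S\<^sup>*(h) - X) \<phi>\<close> (formally \<open>= (AX + XA\<^sup>*) \<phi>\<close>), and on \<open>D(A\<^sup>*)\<close>
  literally \<open>X \<phi> \<in> D(A)\<close> and \<open>A X \<phi> + X A\<^sup>* \<phi> = Z \<phi>\<close>; and \<open>Z - XGX + Q = 0\<close> in \<open>\<L>(H)\<close>.\<close>
definition strong_riccati_eq ::
  "(real \<Rightarrow> 'a::complex_inner \<Rightarrow> 'a) \<Rightarrow> 'a set \<Rightarrow> ('a \<Rightarrow> 'a) \<Rightarrow> 'a set \<Rightarrow> ('a \<Rightarrow> 'a) \<Rightarrow>
   ('a \<Rightarrow> 'a) \<Rightarrow> ('a \<Rightarrow> 'a) \<Rightarrow> ('a \<Rightarrow> 'a) \<Rightarrow> bool" where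
  "strong_riccati_eq S D A Ds As Q G X \<longleftrightarrow>
     (\<exists>Z. symmetric_op Z \<and>
        (\<forall>\<phi>. ((\<lambda>h. (1 / h) *\<^sub>R (S h (X (cadjoint (S h) \<phi>)) - X \<phi>)) \<longlongrightarrow> Z \<phi>) (at_right 0)) \<and>
        (\<forall>\<phi>\<in>Ds. X \<phi> \<in> D \<and> A (X \<phi>) + X (As \<phi>) = Z \<phi>) \<and>
        (\<forall>\<phi>. Z \<phi> - X (G (X \<phi>)) + Q \<phi> = 0))"

end

theory Submission
  imports Defs
begin

text \<open>Write \<open>W = Q - X G X\<close>, so that the integral equation reads
  \<open>X = \<integral>\<^sub>0\<^sup>\<infinity> S(t) W S\<^sup>*(t) dt\<close>. By the semigroup law \<open>S(h) X S\<^sup>*(h)\<close> is the same integral over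
  \<open>[h, \<infinity>)\<close>, so \<open>h\<^sup>-\<^sup>1 (S(h) X S\<^sup>*(h) - X) \<rightarrow> -W\<close> strongly: this is the strong Riccati equation,
  and for \<open>\<phi> \<in> D(A\<^sup>*)\<close> the product rule identifies the limit with \<open>A X \<phi> + X A\<^sup>* \<phi>\<close>.
  Conversely, for a strong solution \<open>Y\<close> the function
  \<open>T \<mapsto> (y, S(T) Y S\<^sup>*(T) \<phi>) + \<integral>\<^sub>0\<^sup>T (y, S(t) W S\<^sup>*(t) \<phi>) dt\<close> has vanishing right derivative,
  hence is constant, and letting \<open>T \<rightarrow> \<infinity>\<close> shows that \<open>Y\<close> solves the integral equation; so
  uniqueness transfers. For the trace bound, \<open>(e, S(t) W S\<^sup>*(t) e) \<le> (S\<^sup>*(t) e, Q S\<^sup>*(t) e)\<close>, and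
  summed over an orthonormal family this is at most
  \<open>\<parallel>S(t)\<parallel>\<^sup>2 \<parallel>Q\<parallel>\<^sub>1 \<le> M\<^sup>2 e\<^sup>-\<^sup>2\<^sup>\<alpha>\<^sup>t \<parallel>Q\<parallel>\<^sub>1\<close>, which integrates to \<open>M\<^sup>2 / (2\<alpha>) \<parallel>Q\<parallel>\<^sub>1\<close>.
  The continuity of all integrands rests on the strong continuity of the adjoint semigroup
  \<open>S\<^sup>*(t)\<close>, which holds in any Hilbert space.\<close>

section \<open>Inner products and bounded operators\<close>

lemma scaleC_zero_left [simp]: "(0::complex) *\<^sub>C x = (0::'a::complex_vector)"
  using scaleR_scaleC[of 0 x] by simp

lemma scaleC_zero_right [simp]: "c *\<^sub>C (0::'a::complex_vector) = 0"
  using scaleC_add_right[of c 0 0] by simp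

declare scaleC_one [simp]

lemma scaleC_minus_right: "c *\<^sub>C (- x) = - (c *\<^sub>C (x::'a::complex_vector))"
  by (rule minus_unique[symmetric]) (simp flip: scaleC_add_right)

lemma scaleC_diff_right: "c *\<^sub>C (x - y) = c *\<^sub>C x - c *\<^sub>C (y::'a::complex_vector)"
  by (simp only: diff_conv_add_uminus scaleC_add_right scaleC_minus_right)

lemma scaleC_sum_right: "c *\<^sub>C (\<Sum>i\<in>I. f i) = (\<Sum>i\<in>I. c *\<^sub>C (f i::'a::complex_vector))"
  by (induction I rule: infinite_finite_induct) (auto simp: scaleC_add_right)

lemma scaleC_scaleR_commute: "c *\<^sub>C (r *\<^sub>R x) = r *\<^sub>R (c *\<^sub>C (x::'a::complex_vector))"
  by (simp add: scaleR_scaleC scaleC_scaleC mult.commute)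

lemma cinner_add_right: "cinner x (y + z) = cinner x y + cinner x (z::'a::complex_inner)"
  by (metis cinner_add_left cinner_commute complex_cnj_add)

lemma cinner_scaleC_right: "cinner x (c *\<^sub>C y) = c * cinner x (y::'a::complex_inner)"
  by (metis cinner_commute cinner_scaleC_left complex_cnj_cnj complex_cnj_mult)

lemma cinner_zero_left [simp]: "cinner 0 (x::'a::complex_inner) = 0"
  using cinner_add_left[of 0 0 x] by simp

lemma cinner_zero_right [simp]: "cinner x (0::'a::complex_inner) = 0"
  using cinner_add_right[of x 0 0] by simp

lemma cinner_minus_left: "cinner (- x) (y::'a::complex_inner) = - cinner x y"
  by (rule minus_unique[symmetric]) (simp flip: cinner_add_left)

lemma cinner_minus_right: "cinner x (- y::'a::complex_inner) = - cinner x y"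
  by (rule minus_unique[symmetric]) (simp flip: cinner_add_right)

lemma cinner_diff_left: "cinner (x - y) (z::'a::complex_inner) = cinner x z - cinner y z"
  by (simp only: diff_conv_add_uminus cinner_add_left cinner_minus_left)

lemma cinner_diff_right: "cinner x (y - z::'a::complex_inner) = cinner x y - cinner x z"
  by (simp only: diff_conv_add_uminus cinner_add_right cinner_minus_right)

lemma cinner_scaleR_left: "cinner (r *\<^sub>R x) (y::'a::complex_inner) = of_real r * cinner x y"
  by (simp add: scaleR_scaleC cinner_scaleC_left)

lemma cinner_scaleR_right: "cinner x (r *\<^sub>R y::'a::complex_inner) = of_real r * cinner x y"
  by (simp add: scaleR_scaleC cinner_scaleC_right)

lemma cinner_sum_left: "cinner (\<Sum>i\<in>I. f i) (y::'a::complex_inner) = (\<Sum>i\<in>I. cinner (f i) y)"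
  by (induction I rule: infinite_finite_induct) (auto simp: cinner_add_left)

lemma cinner_sum_right: "cinner y (\<Sum>i\<in>I. f i::'a::complex_inner) = (\<Sum>i\<in>I. cinner y (f i))"
  by (induction I rule: infinite_finite_induct) (auto simp: cinner_add_right)

lemma cinner_self_Re: "Re (cinner x (x::'a::complex_inner)) = (norm x)\<^sup>2"
  by (simp add: norm_eq_sqrt_cinner cinner_ge_zero)

lemma cinner_self: "cinner x (x::'a::complex_inner) = complex_of_real ((norm x)\<^sup>2)"
proof -
  have "Im (cinner x x) = 0"
    using arg_cong[OF cinner_commute[of x x], of Im] by simp
  then show ?thesis by (simp add: complex_eq_iff cinner_self_Re)
qed

lemma cnj_mult_self: "cnj c * c = complex_of_real ((cmod c)\<^sup>2)"
  by (metis complex_norm_square mult.commute)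

lemma norm_scaleC: "norm (c *\<^sub>C x) = cmod c * norm (x::'a::complex_inner)"
proof -
  have "(norm (c *\<^sub>C x))\<^sup>2 = Re (cinner (c *\<^sub>C x) (c *\<^sub>C x))" by (simp add: cinner_self_Re)
  also have "\<dots> = Re (cnj c * c * cinner x x)"
    by (simp only: cinner_scaleC_left cinner_scaleC_right mult.assoc mult.left_commute)
  also have "\<dots> = (cmod c * norm x)\<^sup>2"
    by (simp add: cnj_mult_self cinner_self_Re power_mult_distrib)
  finally show ?thesis by simp
qed

lemma norm_sq_diff_projection:
  fixes u v :: "'a::complex_inner"
  assumes "v \<noteq> 0"
  shows "(norm (u - (cinner v u / of_real ((norm v)\<^sup>2)) *\<^sub>C v))\<^sup>2
    = (norm u)\<^sup>2 - (cmod (cinner v u))\<^sup>2 / (norm v)\<^sup>2"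
proof -
  define r where "r = (norm v)\<^sup>2"
  define a where "a = cinner v u"
  define c where "c = a / of_real r"
  have r: "r > 0" using assms by (simp add: r_def)
  have "cinner (u - c *\<^sub>C v) (u - c *\<^sub>C v)
      = cinner u u - cnj c * cinner v u - c * cinner u v + cnj c * c * cinner v v"
    by (simp add: cinner_diff_left cinner_diff_right cinner_scaleC_left cinner_scaleC_right
        algebra_simps)
  also have "cinner u v = cnj a" unfolding a_def by (rule cinner_commute)
  also have "cinner v v = of_real r" by (simp add: cinner_self r_def)
  also have "cinner u u - cnj c * cinner v u - c * cnj a + cnj c * c * of_real r
      = cinner u u - cnj a * a / of_real r"
    using r by (simp add: c_def a_def field_simps)
  finally have "cinner (u - c *\<^sub>C v) (u - c *\<^sub>C v) = cinner u u - of_real ((cmod a)\<^sup>2 / r)"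
    by (simp add: cnj_mult_self)
  then have "(norm (u - c *\<^sub>C v))\<^sup>2 = (norm u)\<^sup>2 - (cmod a)\<^sup>2 / r"
    by (metis Re_complex_of_real cinner_self_Re minus_complex.sel(1))
  then show ?thesis by (simp add: a_def c_def r_def)
qed

lemma Cauchy_Schwarz_cinner: "cmod (cinner x y) \<le> norm x * norm (y::'a::complex_inner)"
proof (cases "x = 0")
  case False
  have "0 \<le> (norm y)\<^sup>2 - (cmod (cinner x y))\<^sup>2 / (norm x)\<^sup>2"
    by (simp flip: norm_sq_diff_projection[OF False])
  then have "(cmod (cinner x y))\<^sup>2 \<le> (norm x * norm y)\<^sup>2"
    using False by (simp add: field_simps)
  then show ?thesis by (simp add: power2_le_iff_abs_le)
qed simp

lemma cinner_orthogonal_if_minimal: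
  fixes u v :: "'a::complex_inner"
  assumes "\<And>c. norm u \<le> norm (u - c *\<^sub>C v)"
  shows "cinner v u = 0"
proof (cases "v = 0")
  case False
  have "(norm u)\<^sup>2 \<le> (norm u)\<^sup>2 - (cmod (cinner v u))\<^sup>2 / (norm v)\<^sup>2"
    by (simp flip: norm_sq_diff_projection[OF False] add: assms power_mono)
  then show ?thesis using False by (simp add: divide_le_0_iff)
qed simp

lemma cinner_eqI: "(\<And>x. cinner x y = cinner x z) \<Longrightarrow> y = (z::'a::complex_inner)"
  by (metis cinner_diff_right cinner_eq_zero_iff right_minus_eq)

lemma norm_le_if_cinner_le:
  fixes y :: "'a::complex_inner"
  assumes "0 \<le> e" and "\<And>x. cmod (cinner x y) \<le> norm x * e"
  shows "norm y \<le> e"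
proof (cases "y = 0")
  case True
  then show ?thesis using assms by simp
next
  case False
  have "(norm y)\<^sup>2 = cmod (cinner y y)" by (simp add: cinner_self norm_power)
  also have "\<dots> \<le> norm y * e" by (rule assms(2))
  finally have "norm y * norm y \<le> e * norm y" by (simp add: power2_eq_square mult.commute)
  then show ?thesis using False by simp
qed

lemma bounded_bilinear_cinner: "bounded_bilinear (cinner :: 'a::complex_inner \<Rightarrow> 'a \<Rightarrow> complex)"
proof
  show "\<exists>K. \<forall>a b::'a. norm (cinner a b) \<le> norm a * norm b * K"
    by (rule exI[of _ 1]) (simp add: Cauchy_Schwarz_cinner)
qed (simp_all add: cinner_add_left cinner_add_right cinner_scaleR_left cinner_scaleR_right
    scaleR_conv_of_real)

lemmas tendsto_cinner [tendsto_intros] = bounded_bilinear.tendsto[OF bounded_bilinear_cinner]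

lemmas bounded_linear_cinner_right = bounded_bilinear.bounded_linear_right[OF bounded_bilinear_cinner]

lemma continuous_on_cinner [continuous_intros]:
  "continuous_on A f \<Longrightarrow> continuous_on A g \<Longrightarrow> continuous_on A (\<lambda>s. cinner (f s) (g s))"
  by (auto simp: continuous_on_def intro: tendsto_cinner)

lemma tendsto_scaleC: "(f \<longlongrightarrow> l) F \<Longrightarrow> ((\<lambda>x. c *\<^sub>C f x) \<longlongrightarrow> c *\<^sub>C (l::'a::complex_inner)) F"
  by (rule bounded_linear.tendsto[OF bounded_linear_intro[where K="cmod c"]])
    (auto simp: scaleC_add_right scaleC_scaleR_commute norm_scaleC mult.commute)

instance chilbert_space \<subseteq> banach ..

lemma bounded_clinear_intro:
  assumes "\<And>x y. T (x + y) = T x + T y" "\<And>c x. T (c *\<^sub>C x) = c *\<^sub>C T x"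
    and "\<And>x. norm (T x) \<le> norm x * K"
  shows "bounded_clinear T"
  using assms unfolding bounded_clinear_def clinear_def by blast

lemma bounded_clinear_scaleC: "bounded_clinear T \<Longrightarrow> T (c *\<^sub>C x) = c *\<^sub>C T x"
  by (simp add: bounded_clinear_def clinear_def)

lemma bounded_clinear_imp_bounded_linear: "bounded_clinear T \<Longrightarrow> bounded_linear T"
  unfolding bounded_clinear_def clinear_def
  by (auto intro!: bounded_linear_intro simp: scaleR_scaleC)

lemma bounded_clinear_linear: "bounded_clinear T \<Longrightarrow> linear T"
  by (simp add: bounded_clinear_imp_bounded_linear bounded_linear.linear)

lemmas bounded_clinear_add = linear_add[OF bounded_clinear_linear]
lemmas bounded_clinear_diff = linear_diff[OF bounded_clinear_linear]
lemmas bounded_clinear_minus = linear_neg[OF bounded_clinear_linear]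
lemmas bounded_clinear_zero = linear_0[OF bounded_clinear_linear]
lemmas bounded_clinear_scaleR = linear_scale[OF bounded_clinear_linear]
lemmas bounded_clinear_sum = linear_sum[OF bounded_clinear_linear]

lemma bounded_clinear_norm_le: "bounded_clinear T \<Longrightarrow> norm (T x) \<le> onorm T * norm x"
  by (simp add: bounded_clinear_imp_bounded_linear onorm)

lemma bounded_clinear_onorm_nonneg: "bounded_clinear T \<Longrightarrow> 0 \<le> onorm T"
  by (simp add: bounded_clinear_imp_bounded_linear onorm_pos_le)

lemma bounded_clinear_tendsto:
  "bounded_clinear T \<Longrightarrow> (f \<longlongrightarrow> l) F \<Longrightarrow> ((\<lambda>x. T (f x)) \<longlongrightarrow> T l) F"
  using bounded_clinear_imp_bounded_linear bounded_linear.tendsto by blast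

lemma bounded_clinear_continuous_on: "bounded_clinear T \<Longrightarrow> continuous_on S T"
  by (simp add: bounded_clinear_imp_bounded_linear linear_continuous_on)

lemma bounded_clinear_compose:
  assumes T: "bounded_clinear T" and U: "bounded_clinear U"
  shows "bounded_clinear (\<lambda>x. T (U x))"
proof (rule bounded_clinear_intro[where K="onorm U * onorm T"])
  fix x
  have "norm (T (U x)) \<le> onorm T * norm (U x)" by (rule bounded_clinear_norm_le[OF T])
  also have "\<dots> \<le> onorm T * (onorm U * norm x)"
    by (rule mult_left_mono[OF bounded_clinear_norm_le[OF U] bounded_clinear_onorm_nonneg[OF T]])
  finally show "norm (T (U x)) \<le> norm x * (onorm U * onorm T)" by (simp add: algebra_simps)
qed (simp_all add: bounded_clinear_add bounded_clinear_scaleC T U)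

lemma bounded_clinear_sub:
  assumes T: "bounded_clinear T" and U: "bounded_clinear U"
  shows "bounded_clinear (\<lambda>x. T x - U x)"
proof (rule bounded_clinear_intro[where K="onorm T + onorm U"])
  show "norm (T x - U x) \<le> norm x * (onorm T + onorm U)" for x
    using norm_triangle_ineq4[of "T x" "U x"] bounded_clinear_norm_le[OF T, of x]
      bounded_clinear_norm_le[OF U, of x]
    by (simp add: algebra_simps)
qed (simp_all add: bounded_clinear_add bounded_clinear_diff bounded_clinear_scaleC
    scaleC_diff_right T U)

lemma bounded_clinear_ident: "bounded_clinear (\<lambda>x. x)"
  by (rule bounded_clinear_intro[where K=1]) auto

lemma bounded_clinear_id: "bounded_clinear id"
  using bounded_clinear_ident by (simp add: id_def)

section \<open>Projection, Riesz representation and adjoints\<close>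

definition csubspace :: "'a::complex_vector set \<Rightarrow> bool" where
  "csubspace L \<longleftrightarrow> 0 \<in> L \<and> (\<forall>x\<in>L. \<forall>y\<in>L. x + y \<in> L) \<and> (\<forall>c. \<forall>x\<in>L. c *\<^sub>C x \<in> L)"

lemma csubspace_scaleR: "csubspace L \<Longrightarrow> x \<in> L \<Longrightarrow> r *\<^sub>R x \<in> L"
  by (simp add: csubspace_def scaleR_scaleC)

lemma parallelogram_law:
  fixes a b :: "'a::complex_inner"
  shows "(norm (a + b))\<^sup>2 + (norm (a - b))\<^sup>2 = 2 * (norm a)\<^sup>2 + 2 * (norm b)\<^sup>2"
proof -
  have "Re (cinner b a) = Re (cinner a b)" by (subst cinner_commute) simp
  then show ?thesis
    by (simp add: cinner_self_Re[symmetric] cinner_add_left cinner_add_right cinner_diff_left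
        cinner_diff_right)
qed

text \<open>A minimizing sequence for the distance to a subspace is Cauchy, by the parallelogram law
  applied to \<open>x - v m\<close> and \<open>x - v n\<close>: their midpoint is at distance at least \<open>\<surd>d\<close> from \<open>x\<close>.\<close>
lemma minimizing_sequence_Cauchy:
  fixes v :: "nat \<Rightarrow> 'a::complex_inner"
  assumes L: "csubspace L" and vL: "\<And>n. v n \<in> L"
    and d_le: "\<And>w. w \<in> L \<Longrightarrow> d \<le> (norm (x - w))\<^sup>2"
    and v_close: "\<And>n. (norm (x - v n))\<^sup>2 < d + 1 / Suc n"
  shows "Cauchy v"
proof (rule CauchyI)
  have gap: "(norm (v m - v n))\<^sup>2 \<le> 2 / Suc m + 2 / Suc n" for m n
  proof -
    define mid where "mid = (1/2) *\<^sub>R (v m + v n)"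
    have "mid \<in> L"
      using L vL by (simp add: mid_def csubspace_scaleR csubspace_def)
    then have "4 * d \<le> (norm (2 *\<^sub>R (x - mid)))\<^sup>2"
      using d_le by (simp add: power_mult_distrib)
    also have "2 *\<^sub>R (x - mid) = (x - v m) + (x - v n)"
      by (simp add: mid_def algebra_simps scaleR_2 flip: scaleR_add_left)
    finally have "4 * d \<le> (norm ((x - v m) + (x - v n)))\<^sup>2" .
    moreover have "(x - v m) - (x - v n) = v n - v m" by simp
    ultimately show ?thesis
      using parallelogram_law[of "x - v m" "x - v n"] v_close[of m] v_close[of n]
      by (simp add: norm_minus_commute)
  qed
  fix e :: real assume e: "e > 0"
  obtain N :: nat where N: "4 / e\<^sup>2 < N" using reals_Archimedean2 by blast
  moreover have "0 < 4 / e\<^sup>2" using e by simp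
  ultimately have N_pos: "N > 0" by linarith
  show "\<exists>M. \<forall>m\<ge>M. \<forall>n\<ge>M. norm (v m - v n) < e"
  proof (intro exI allI impI)
    fix m n assume "N \<le> m" "N \<le> n"
    then have "2 / Suc m \<le> 2 / N" "2 / Suc n \<le> 2 / N"
      using N_pos by (simp_all add: frac_le)
    moreover have "4 / N < e\<^sup>2" using N e N_pos by (simp add: field_simps)
    ultimately have "(norm (v m - v n))\<^sup>2 < e\<^sup>2" using gap[of m n] by simp
    then show "norm (v m - v n) < e" using e by (simp add: power_less_imp_less_base)
  qed
qed

lemma nearest_point_exists:
  fixes L :: "'a::chilbert_space set"
  assumes L: "csubspace L" "closed L"
  shows "\<exists>p\<in>L. \<forall>w\<in>L. norm (x - p) \<le> norm (x - w)"
proof -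
  define d where "d = (INF w\<in>L. (norm (x - w))\<^sup>2)"
  have bdd: "bdd_below ((\<lambda>w. (norm (x - w))\<^sup>2) ` L)" by (auto intro: bdd_belowI[of _ 0])
  have d_le: "d \<le> (norm (x - w))\<^sup>2" if "w \<in> L" for w
    using bdd that unfolding d_def by (rule cINF_lower)
  have "\<exists>w\<in>L. (norm (x - w))\<^sup>2 < d + 1 / Suc n" for n
  proof -
    have ne: "(\<lambda>w. (norm (x - w))\<^sup>2) ` L \<noteq> {}" using L(1) by (auto simp: csubspace_def)
    have "Inf ((\<lambda>w. (norm (x - w))\<^sup>2) ` L) < d + 1 / Suc n" unfolding d_def by simp
    from cInf_lessD[OF ne this] show ?thesis by blast
  qed
  then obtain v where vL: "\<And>n. v n \<in> L" and v_close: "\<And>n. (norm (x - v n))\<^sup>2 < d + 1 / Suc n"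
    by metis
  obtain p where vp: "v \<longlonglongrightarrow> p"
    using minimizing_sequence_Cauchy[OF L(1) vL d_le v_close] Cauchy_convergent convergent_def
    by blast
  have pL: "p \<in> L" using L(2) vL vp closed_sequentially by blast
  have "(\<lambda>n. (norm (x - v n))\<^sup>2) \<longlonglongrightarrow> d"
  proof (rule real_tendsto_sandwich[where f="\<lambda>n. d" and h="\<lambda>n. d + 1 / Suc n"])
    show "(\<lambda>n. d + 1 / Suc n) \<longlonglongrightarrow> d"
      using tendsto_add[OF tendsto_const[of d] LIMSEQ_Suc[OF lim_const_over_n[of 1]]] by simp
    show "\<forall>\<^sub>F n in sequentially. (norm (x - v n))\<^sup>2 \<le> d + 1 / Suc n"
      using v_close by (intro always_eventually allI less_imp_le)
  qed (use d_le vL in auto)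
  moreover have "(\<lambda>n. (norm (x - v n))\<^sup>2) \<longlonglongrightarrow> (norm (x - p))\<^sup>2"
    by (intro tendsto_intros vp)
  ultimately have "(norm (x - p))\<^sup>2 = d" using LIMSEQ_unique by blast
  then have "\<forall>w\<in>L. norm (x - p) \<le> norm (x - w)"
    using d_le by (auto simp: power2_le_iff_abs_le)
  then show ?thesis using pL by blast
qed

lemma projection_exists:
  fixes L :: "'a::chilbert_space set"
  assumes L: "csubspace L" "closed L"
  shows "\<exists>p\<in>L. \<forall>w\<in>L. cinner w (x - p) = 0"
proof -
  obtain p where pL: "p \<in> L" and p_min: "\<And>w. w \<in> L \<Longrightarrow> norm (x - p) \<le> norm (x - w)"
    using nearest_point_exists[OF L] by blast
  have "cinner w (x - p) = 0" if w: "w \<in> L" for w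
  proof (rule cinner_orthogonal_if_minimal)
    fix c
    have "p + c *\<^sub>C w \<in> L" using L(1) pL w by (simp add: csubspace_def)
    then show "norm (x - p) \<le> norm (x - p - c *\<^sub>C w)"
      using p_min by (simp add: diff_diff_add)
  qed
  then show ?thesis using pL by blast
qed

lemma riesz_representation:
  fixes f :: "'a::chilbert_space \<Rightarrow> complex"
  assumes add: "\<And>x y. f (x + y) = f x + f y" and scale: "\<And>c x. f (c *\<^sub>C x) = c * f x"
    and bound: "\<And>x. cmod (f x) \<le> norm x * K"
  shows "\<exists>z. \<forall>x. f x = cinner z x"
proof (cases "\<forall>x. f x = 0")
  case True
  then show ?thesis by (intro exI[of _ 0]) simp
next
  case False
  then obtain x0 where x0: "f x0 \<noteq> 0" by blast
  have f_lin: "bounded_linear f"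
    by (rule bounded_linear_intro[where K=K])
      (auto simp: add scaleR_scaleC scale bound scaleR_conv_of_real scaleC_complex_def)
  define L where "L = {x. f x = 0}"
  have "csubspace L"
    using linear_0[OF bounded_linear.linear[OF f_lin]] by (auto simp: L_def csubspace_def add scale)
  moreover have "closed L"
    unfolding L_def by (rule closed_Collect_eq) (auto intro: linear_continuous_on f_lin)
  ultimately obtain p where pL: "p \<in> L" and orth: "\<And>w. w \<in> L \<Longrightarrow> cinner w (x0 - p) = 0"
    using projection_exists by blast
  define u where "u = x0 - p"
  have fu: "f u = f x0"
    using pL linear_diff[OF bounded_linear.linear[OF f_lin]] by (simp add: L_def u_def)
  have uu: "cinner u u \<noteq> 0"
    using fu x0 linear_0[OF bounded_linear.linear[OF f_lin]] by (auto simp: cinner_eq_zero_iff)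
  show ?thesis
  proof (intro exI allI)
    fix x
    have "x - (f x / f u) *\<^sub>C u \<in> L"
      using x0 fu linear_diff[OF bounded_linear.linear[OF f_lin]] by (simp add: L_def scale)
    then have "cinner (x - (f x / f u) *\<^sub>C u) u = 0" using orth by (simp add: u_def)
    then have "cinner x u = cnj (f x / f u) * cinner u u"
      by (simp add: cinner_diff_left cinner_scaleC_left)
    then have "cinner u x = (f x / f u) * cinner u u"
      by (metis cinner_commute complex_cnj_cnj complex_cnj_mult)
    then have "f x = (f u / cinner u u) * cinner u x"
      using uu x0 fu by (simp add: field_simps)
    then show "f x = cinner (cnj (f u / cinner u u) *\<^sub>C u) x"
      by (simp add: cinner_scaleC_left)
  qed
qed

lemma cadjoint_exists:
  fixes T :: "'a::chilbert_space \<Rightarrow> 'a"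
  assumes T: "bounded_clinear T"
  shows "\<exists>z. \<forall>x. cinner (T x) y = cinner x z"
proof -
  have "\<exists>w. \<forall>x. cinner y (T x) = cinner w x"
  proof (rule riesz_representation[where K="norm y * onorm T"])
    fix x
    have "cmod (cinner y (T x)) \<le> norm y * norm (T x)" by (rule Cauchy_Schwarz_cinner)
    also have "\<dots> \<le> norm y * (onorm T * norm x)"
      by (simp add: bounded_clinear_norm_le[OF T] mult_left_mono)
    finally show "cmod (cinner y (T x)) \<le> norm x * (norm y * onorm T)"
      by (simp add: algebra_simps)
  qed (simp_all add: bounded_clinear_add[OF T] bounded_clinear_scaleC[OF T] cinner_add_right
      cinner_scaleC_right)
  then obtain w where "\<And>x. cinner y (T x) = cinner w x" by blast
  then have "\<And>x. cinner (T x) y = cinner x w" by (metis cinner_commute)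
  then show ?thesis by blast
qed

lemma cinner_cadjoint:
  fixes T :: "'a::chilbert_space \<Rightarrow> 'a"
  assumes T: "bounded_clinear T"
  shows "cinner (T x) y = cinner x (cadjoint T y)"
proof -
  obtain z where z: "\<forall>x. cinner (T x) y = cinner x z" using cadjoint_exists[OF T] by blast
  have "\<exists>!z. \<forall>x. cinner (T x) y = cinner x z"
  proof (rule ex1I[of _ z])
    show "\<And>w. \<forall>x. cinner (T x) y = cinner x w \<Longrightarrow> w = z"
      using z by (metis cinner_eqI)
  qed (rule z)
  then show ?thesis unfolding cadjoint_def by (rule theI'[THEN spec])
qed

lemma cinner_cadjoint_left:
  fixes T :: "'a::chilbert_space \<Rightarrow> 'a"
  assumes T: "bounded_clinear T"
  shows "cinner (cadjoint T y) x = cinner y (T x)"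
  by (metis cinner_cadjoint[OF T] cinner_commute)

lemma cadjoint_eqI:
  fixes T :: "'a::chilbert_space \<Rightarrow> 'a"
  assumes T: "bounded_clinear T" and z: "\<And>x. cinner (T x) y = cinner x z"
  shows "cadjoint T y = z"
  by (rule cinner_eqI) (simp add: cinner_cadjoint[OF T, symmetric] z)

lemma norm_cadjoint_le:
  fixes T :: "'a::chilbert_space \<Rightarrow> 'a"
  assumes T: "bounded_clinear T"
  shows "norm (cadjoint T y) \<le> onorm T * norm y"
proof (rule norm_le_if_cinner_le)
  show "0 \<le> onorm T * norm y" by (simp add: bounded_clinear_onorm_nonneg[OF T])
  fix x
  have "cmod (cinner x (cadjoint T y)) \<le> norm (T x) * norm y"
    by (simp flip: cinner_cadjoint[OF T] add: Cauchy_Schwarz_cinner)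
  also have "\<dots> \<le> norm x * (onorm T * norm y)"
    using mult_right_mono[OF bounded_clinear_norm_le[OF T, of x] norm_ge_zero[of y]]
    by (simp add: algebra_simps)
  finally show "cmod (cinner x (cadjoint T y)) \<le> norm x * (onorm T * norm y)" .
qed

lemma bounded_clinear_cadjoint:
  fixes T :: "'a::chilbert_space \<Rightarrow> 'a"
  assumes T: "bounded_clinear T"
  shows "bounded_clinear (cadjoint T)"
proof (rule bounded_clinear_intro[where K="onorm T"])
  show "cadjoint T (x + y) = cadjoint T x + cadjoint T y" for x y
    by (rule cadjoint_eqI[OF T]) (simp add: cinner_add_right cinner_cadjoint[OF T])
  show "cadjoint T (c *\<^sub>C x) = c *\<^sub>C cadjoint T x" for c x
    by (rule cadjoint_eqI[OF T]) (simp add: cinner_scaleC_right cinner_cadjoint[OF T])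
  show "norm (cadjoint T x) \<le> norm x * onorm T" for x
    using norm_cadjoint_le[OF T] by (simp add: mult.commute)
qed

lemma cadjoint_comp:
  fixes T U :: "'a::chilbert_space \<Rightarrow> 'a"
  assumes T: "bounded_clinear T" and U: "bounded_clinear U"
  shows "cadjoint (T \<circ> U) y = cadjoint U (cadjoint T y)"
proof -
  have TU: "bounded_clinear (T \<circ> U)"
    using bounded_clinear_compose[OF T U] by (simp add: comp_def)
  show ?thesis
    by (rule cadjoint_eqI[OF TU]) (simp add: cinner_cadjoint[OF T] cinner_cadjoint[OF U])
qed

lemma cadjoint_id: "cadjoint (id::'a::chilbert_space \<Rightarrow> 'a) y = y"
  by (rule cadjoint_eqI[OF bounded_clinear_id]) simp

section \<open>Averages, one-sided derivatives and integrals on the half-line\<close>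

lemma tendsto_integral_average_at_right:
  fixes k :: "real \<Rightarrow> 'a::banach"
  assumes k: "continuous_on {a..b} k" and ab: "a < b"
  shows "((\<lambda>d. (1/d) *\<^sub>R integral {a..a+d} k) \<longlongrightarrow> k a) (at_right 0)"
proof -
  have "((\<lambda>u. integral {a..u} k) has_vector_derivative k a) (at a within {a..b})"
    using integral_has_vector_derivative[OF k] ab by simp
  then have "((\<lambda>y. (1 / norm (y - a)) *\<^sub>R (integral {a..y} k - (y - a) *\<^sub>R k a)) \<longlongrightarrow> 0)
      (at a within {a..b})"
    by (simp add: has_vector_derivative_def has_derivative_within)
  moreover have "filterlim (\<lambda>d. a + d) (at a within {a..b}) (at_right 0)"
  proof (rule filterlim_at_withinI)
    show "((\<lambda>d. a + d) \<longlongrightarrow> a) (at_right 0)"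
      by (auto intro!: tendsto_eq_intros)
    show "\<forall>\<^sub>F d in at_right 0. a + d \<in> {a..b} - {a}"
      using ab by (auto simp: eventually_at_right_field intro!: exI[of _ "b - a"])
  qed
  ultimately have "((\<lambda>d. (1 / norm d) *\<^sub>R (integral {a..a+d} k - d *\<^sub>R k a)) \<longlongrightarrow> 0) (at_right 0)"
    by (auto dest: filterlim_compose)
  then have "((\<lambda>d. (1 / norm d) *\<^sub>R (integral {a..a+d} k - d *\<^sub>R k a) + k a) \<longlongrightarrow> 0 + k a)
      (at_right 0)"
    by (intro tendsto_add tendsto_const)
  moreover have "\<forall>\<^sub>F d in at_right 0.
      (1 / norm d) *\<^sub>R (integral {a..a+d} k - d *\<^sub>R k a) + k a = (1/d) *\<^sub>R integral {a..a+d} k"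
    using eventually_at_right_less[of 0] by eventually_elim (simp add: scaleR_diff_right)
  ultimately show ?thesis by (simp add: Lim_transform_eventually)
qed

lemma right_derivative_zero_growth_le:
  fixes p :: "real \<Rightarrow> 'a::real_normed_vector"
  assumes cont: "continuous_on {0..T} p"
    and der: "\<And>t. 0 \<le> t \<Longrightarrow> t < T \<Longrightarrow> ((\<lambda>h. (1/h) *\<^sub>R (p (t+h) - p t)) \<longlongrightarrow> 0) (at_right 0)"
    and T: "0 \<le> T" and e: "e > 0"
  shows "norm (p T - p 0) \<le> e * T"
proof -
  define A where "A = {s\<in>{0..T}. norm (p s - p 0) \<le> e * s}"
  have A0: "0 \<in> A" using T by (simp add: A_def)
  have A_bdd: "bdd_above A" by (auto simp: A_def intro!: bdd_aboveI[of _ T])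
  have "continuous_on {0..T} (\<lambda>s. norm (p s - p 0) - e * s)"
    by (intro continuous_intros continuous_on_subset[OF cont]) auto
  moreover have "A = {0..T} \<inter> (\<lambda>s. norm (p s - p 0) - e * s) -` {..0}"
    by (auto simp: A_def)
  ultimately have "closed A"
    using continuous_closed_preimage[OF _ closed_atLeastAtMost closed_atMost[of 0]] by simp
  then have s0A: "Sup A \<in> A" using A0 A_bdd closed_contains_Sup by blast
  define s0 where "s0 = Sup A"
  have "s0 = T"
  proof (rule ccontr)
    assume "s0 \<noteq> T"
    then have s0: "0 \<le> s0" "s0 < T" using s0A by (auto simp: A_def s0_def)
    text \<open>The right derivative at \<open>s0\<close> is small, so the growth bound persists a little beyond
      \<open>s0 = Sup A\<close>.\<close>
    have "\<forall>\<^sub>F h in at_right 0. dist ((1/h) *\<^sub>R (p (s0+h) - p s0)) 0 < e"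
      using der[OF s0] e tendstoD by blast
    then obtain b where b: "b > 0"
      and small: "\<And>h. 0 < h \<Longrightarrow> h < b \<Longrightarrow> norm ((1/h) *\<^sub>R (p (s0+h) - p s0)) < e"
      unfolding eventually_at_right_field by auto
    define h where "h = min b (T - s0) / 2"
    have h: "0 < h" "h < b" "s0 + h \<le> T" using b s0 by (auto simp: h_def min_def field_simps)
    have "norm (p (s0+h) - p s0) / h < e"
      using small[OF h(1,2)] h(1) by simp
    then have "norm (p (s0+h) - p s0) < e * h" using h(1) by (simp add: divide_less_eq)
    moreover have "norm (p s0 - p 0) \<le> e * s0" using s0A by (simp add: A_def s0_def)
    moreover have "norm (p (s0+h) - p 0) \<le> norm (p (s0+h) - p s0) + norm (p s0 - p 0)"
      by (rule order_trans[OF _ norm_triangle_ineq]) simp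
    ultimately have "s0 + h \<in> A" using h s0 by (simp add: A_def algebra_simps)
    then have "s0 + h \<le> s0" unfolding s0_def using A_bdd by (rule cSup_upper)
    then show False using h by simp
  qed
  then show ?thesis using s0A by (simp add: A_def s0_def)
qed

lemma right_derivative_zero_imp_constant:
  fixes p :: "real \<Rightarrow> 'a::real_normed_vector"
  assumes cont: "continuous_on {0..T} p"
    and der: "\<And>t. 0 \<le> t \<Longrightarrow> t < T \<Longrightarrow> ((\<lambda>h. (1/h) *\<^sub>R (p (t+h) - p t)) \<longlongrightarrow> 0) (at_right 0)"
    and T: "0 \<le> T"
  shows "p T = p 0"
proof (cases "T = 0")
  case False
  then have T_pos: "T > 0" using T by simp
  have "norm (p T - p 0) \<le> 0 + e" if "e > 0" for e
    using right_derivative_zero_growth_le[OF cont der T, of "e / T"] that T_pos by simp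
  then have "norm (p T - p 0) \<le> 0" by (rule field_le_epsilon)
  then show ?thesis by simp
qed simp

lemma integral_shift_diff:
  fixes k :: "real \<Rightarrow> 'a::banach"
  assumes k: "continuous_on {0..} k" and t: "0 \<le> t" "t \<le> \<delta>"
  shows "integral {0..\<delta>} (\<lambda>s. k (s + t)) - integral {0..\<delta>} k
    = integral {\<delta>..\<delta>+t} k - integral {0..t} k"
proof -
  have int: "k integrable_on {a..b}" if "0 \<le> a" for a b
    by (rule integrable_continuous_interval, rule continuous_on_subset[OF k]) (use that in auto)
  have "integral {0..\<delta>} (\<lambda>s. k (s + t)) = integral {t..\<delta>+t} k"
    using integral_shift_Icc_real[of 0 \<delta> k t] by (simp add: comp_def add.commute)
  also have "\<dots> = integral {t..\<delta>} k + integral {\<delta>..\<delta>+t} k"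
    using t int[of t "\<delta> + t"] by (intro Henstock_Kurzweil_Integration.integral_combine[symmetric]) auto
  moreover have "integral {0..\<delta>} k = integral {0..t} k + integral {t..\<delta>} k"
    using t int[of 0 \<delta>] by (intro Henstock_Kurzweil_Integration.integral_combine[symmetric]) auto
  ultimately show ?thesis by (simp add: algebra_simps)
qed

lemma sets_lebesgue_atLeast: "{a::real..} \<in> sets lebesgue"
  by (metis atLeast_borel sets_completionI_sets sets_lborel)

lemma has_bochner_integral_exp_decay:
  fixes a C :: real
  assumes a: "a > 0"
  shows "has_bochner_integral (lebesgue_on {0..}) (\<lambda>t. C * exp (- a * t)) (C / a)"
proof -
  have exp_int: "((\<lambda>t. exp (- a * t)) has_integral 1 / a) {0..}"
    using has_integral_exp_minus_to_infinity[of a 0] a by simp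
  then have "(\<lambda>t. exp (- a * t)) absolutely_integrable_on {0..}"
    by (intro nonnegative_absolutely_integrable_1) (auto simp: integrable_on_def)
  then have int: "integrable (lebesgue_on {0..}) (\<lambda>t. exp (- a * t))"
    by (rule absolutely_integrable_imp_integrable[OF _ sets_lebesgue_atLeast])
  have "integral\<^sup>L (lebesgue_on {0..}) (\<lambda>t. exp (- a * t)) = 1 / a"
    using has_integral_integral_lebesgue_on[OF int sets_lebesgue_atLeast] exp_int
    by (rule has_integral_unique)
  then have "has_bochner_integral (lebesgue_on {0..}) (\<lambda>t. exp (- a * t)) (1 / a)"
    using has_bochner_integral_integrable[OF int] by simp
  from has_bochner_integral_mult_right[OF this, of C] show ?thesis by simp
qed

lemma has_integral_Icc_of_tails:
  fixes g :: "real \<Rightarrow> 'b::euclidean_space"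
  assumes I1: "has_bochner_integral (lebesgue_on {0..}) g I1"
    and I2: "has_bochner_integral (lebesgue_on {0..}) (\<lambda>t. g (h + t)) I2" and h: "h > 0"
  shows "(g has_integral (I1 - I2)) {0..h}"
proof -
  have sets: "{0::real..} \<inter> space lebesgue \<in> sets lebesgue"
    using sets_lebesgue_atLeast by simp
  have "has_bochner_integral lebesgue (\<lambda>x. indicator {0..} x *\<^sub>R g x) I1"
    using I1 has_bochner_integral_restrict_space[OF sets, of g I1] by simp
  moreover have "has_bochner_integral lebesgue (\<lambda>x. indicator {0..} x *\<^sub>R g (h + x)) I2"
    using I2 has_bochner_integral_restrict_space[OF sets, of "\<lambda>t. g (h + t)" I2] by simp
  then have "has_bochner_integral lebesgue (\<lambda>x. indicator {h..} x *\<^sub>R g x) I2"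
    using has_bochner_integral_lebesgue_real_affine_iff[of 1 "\<lambda>x. indicator {h..} x *\<^sub>R g x" I2 h]
    by (simp add: indicator_def)
  ultimately have "has_bochner_integral lebesgue
      (\<lambda>x. indicator {0..} x *\<^sub>R g x - indicator {h..} x *\<^sub>R g x) (I1 - I2)"
    by (rule has_bochner_integral_diff)
  moreover have "indicator {0..} x *\<^sub>R g x - indicator {h..} x *\<^sub>R g x = indicator {0..<h} x *\<^sub>R g x"
    for x
    using h by (auto simp: indicator_def)
  ultimately have hb: "has_bochner_integral lebesgue (\<lambda>x. indicator {0..<h} x *\<^sub>R g x) (I1 - I2)"
    by simp
  then have "((\<lambda>x. indicator {0..<h} x *\<^sub>R g x) has_integral (I1 - I2)) UNIV"
    using has_integral_integral_lebesgue[of "\<lambda>x. indicator {0..<h} x *\<^sub>R g x"]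
    by (auto simp: has_bochner_integral_iff)
  then have "(g has_integral (I1 - I2)) {0..<h}"
    by (simp only: indicator_scaleR_eq_if has_integral_restrict_UNIV)
  moreover have "(g has_integral (I1 - I2)) {0..<h} \<longleftrightarrow> (g has_integral (I1 - I2)) {0..h}"
    by (rule has_integral_spike_set_eq) (auto intro: negligible_subset[OF negligible_sing[of h]])
  ultimately show ?thesis by simp
qed

lemma tendsto_integral_Icc_at_top:
  fixes g :: "real \<Rightarrow> 'b::euclidean_space"
  assumes g: "integrable (lebesgue_on {0..}) g"
  shows "((\<lambda>T. integral {0..T} g) \<longlongrightarrow> integral\<^sup>L (lebesgue_on {0..}) g) at_top"
proof -
  have si: "set_integrable lebesgue {0..} g"
    using g integrable_restrict_space[of "{0::real..}" lebesgue g] sets_lebesgue_atLeast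
    by (simp add: set_integrable_def)
  have "((\<lambda>T. set_lebesgue_integral lebesgue {0..T} g) \<longlongrightarrow> set_lebesgue_integral lebesgue {0..} g)
      at_top"
    by (rule tendsto_set_lebesgue_integral_at_top[OF _ si]) auto
  moreover have "set_lebesgue_integral lebesgue {0..} g = integral\<^sup>L (lebesgue_on {0..}) g"
    using set_lebesgue_integral_eq_integral(2)[OF si]
      integral_unique[OF has_integral_integral_lebesgue_on[OF g sets_lebesgue_atLeast]] by simp
  moreover have "\<forall>\<^sub>F T in at_top. set_lebesgue_integral lebesgue {0..T} g = integral {0..T} g"
    using eventually_ge_at_top[of "0::real"]
  proof eventually_elim
    case (elim T)
    have "set_integrable lebesgue {0..T} g" by (rule set_integrable_subset[OF si]) auto
    then show ?case by (rule set_lebesgue_integral_eq_integral(2))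
  qed
  ultimately show ?thesis by (auto elim: Lim_transform_eventually)
qed

lemma norm_average_minus_le:
  fixes g :: "real \<Rightarrow> 'a::real_normed_vector"
  assumes J: "(g has_integral J) {0..h}" and h: "h > 0"
    and close: "\<And>s. s \<in> {0..h} \<Longrightarrow> norm (g s - g 0) \<le> c"
  shows "norm ((1/h) *\<^sub>R J - g 0) \<le> c"
proof -
  have c: "0 \<le> c" using close[of 0] h by simp
  have "((\<lambda>s. g s - g 0) has_integral (J - h *\<^sub>R g 0)) (cbox 0 h)"
    using has_integral_diff[OF J has_integral_const_real[of "g 0" 0 h]] h by (simp add: cbox_interval)
  from c this have "norm (J - h *\<^sub>R g 0) \<le> c * Henstock_Kurzweil_Integration.content (cbox 0 h)"
    by (rule has_integral_bound) (use close in \<open>auto simp: cbox_interval\<close>)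
  then have "norm (J - h *\<^sub>R g 0) \<le> c * h" using h by simp
  moreover have "(1/h) *\<^sub>R J - g 0 = (1/h) *\<^sub>R (J - h *\<^sub>R g 0)"
    using h by (simp add: scaleR_diff_right)
  then have "norm ((1/h) *\<^sub>R J - g 0) = norm (J - h *\<^sub>R g 0) / h"
    using h by simp
  ultimately show ?thesis using h by (simp add: divide_le_eq)
qed

section \<open>Strongly continuous semigroups and their adjoints\<close>

text \<open>The normalization \<open>T 0 = id\<close> is not part of this notion; none of its uses needs it.\<close>
definition bounded_c0_semigroup :: "(real \<Rightarrow> 'a::real_normed_vector \<Rightarrow> 'a) \<Rightarrow> real \<Rightarrow> bool" where
  "bounded_c0_semigroup T K \<longleftrightarrow> 0 \<le> K \<and> (\<forall>t\<ge>0. linear (T t)) \<and>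
     (\<forall>t\<ge>0. \<forall>x. norm (T t x) \<le> K * norm x) \<and>
     (\<forall>t s x. 0 \<le> t \<longrightarrow> 0 \<le> s \<longrightarrow> T (t + s) x = T t (T s x)) \<and>
     (\<forall>x. ((\<lambda>h. T h x) \<longlongrightarrow> x) (at_right 0))"

lemma bounded_c0_semigroup_tendsto:
  assumes T: "bounded_c0_semigroup T K" and t: "0 \<le> t"
  shows "((\<lambda>s. T s x) \<longlongrightarrow> T t x) (at t within {0..})"
proof (rule tendstoI)
  fix e :: real assume e: "e > 0"
  have K: "0 \<le> K" and lin: "\<And>t. 0 \<le> t \<Longrightarrow> linear (T t)"
    and bound: "\<And>t x. 0 \<le> t \<Longrightarrow> norm (T t x) \<le> K * norm x"
    and add: "\<And>t s x. 0 \<le> t \<Longrightarrow> 0 \<le> s \<Longrightarrow> T (t + s) x = T t (T s x)"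
    and right: "((\<lambda>h. T h x) \<longlongrightarrow> x) (at_right 0)"
    using T by (auto simp: bounded_c0_semigroup_def)
  have near: "norm (T s x - T t x) \<le> K * norm (T \<bar>s - t\<bar> x - x)" if s: "0 \<le> s" for s
  proof (cases "t \<le> s")
    case True
    have "T s x - T t x = T t (T (s - t) x - x)"
      using add[of t "s - t" x] True t linear_diff[OF lin[OF t]] by simp
    then show ?thesis using bound[OF t] True by simp
  next
    case False
    have "T s x - T t x = T s (x - T (t - s) x)"
      using add[of s "t - s" x] False s linear_diff[OF lin[OF s]] by simp
    then show ?thesis using bound[OF s] False by (simp add: norm_minus_commute)
  qed
  have "\<forall>\<^sub>F h in at_right 0. dist (T h x) x < e / (K + 1)"
    using e K by (intro tendstoD[OF right]) simp
  then obtain b where b: "b > 0" and small: "\<And>h. 0 < h \<Longrightarrow> h < b \<Longrightarrow> norm (T h x - x) < e / (K + 1)"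
    unfolding eventually_at_right_field by (auto simp: dist_norm)
  have Ke: "K * (e / (K + 1)) < e" using K e by (simp add: field_simps)
  show "\<forall>\<^sub>F s in at t within {0..}. dist (T s x) (T t x) < e"
    unfolding eventually_at
  proof (intro exI[of _ b] conjI ballI impI)
    fix s :: real assume "s \<in> {0..}" and st: "s \<noteq> t \<and> dist s t < b"
    then have "norm (T s x - T t x) \<le> K * (e / (K + 1))"
      using near[of s] small[of "\<bar>s - t\<bar>"] K
      by (intro order_trans[OF near] mult_left_mono) (auto simp: dist_real_def)
    then show "dist (T s x) (T t x) < e" using Ke by (simp add: dist_norm)
  qed (rule b)
qed

lemma bounded_c0_semigroup_tendsto_comp:
  assumes T: "bounded_c0_semigroup T K" and t: "0 \<le> t"
    and f: "(f \<longlongrightarrow> y) (at t within {0..})"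
  shows "((\<lambda>s. T s (f s)) \<longlongrightarrow> T t y) (at t within {0..})"
proof -
  have lin: "\<And>t. 0 \<le> t \<Longrightarrow> linear (T t)"
    and bound: "\<And>t x. 0 \<le> t \<Longrightarrow> norm (T t x) \<le> K * norm x"
    using T by (auto simp: bounded_c0_semigroup_def)
  have ev: "\<forall>\<^sub>F s in at t within {0..}. 0 \<le> s" by (auto simp: eventually_at_filter)
  have "((\<lambda>s. T s (f s - y)) \<longlongrightarrow> 0) (at t within {0..})"
  proof (rule Lim_null_comparison)
    show "\<forall>\<^sub>F s in at t within {0..}. norm (T s (f s - y)) \<le> K * norm (f s - y)"
      using ev by eventually_elim (rule bound)
    show "((\<lambda>s. K * norm (f s - y)) \<longlongrightarrow> 0) (at t within {0..})"
      using f by (intro tendsto_mult_right_zero) (simp add: tendsto_norm_zero_iff LIM_zero_iff)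
  qed
  then have "((\<lambda>s. T s (f s - y) + T s y) \<longlongrightarrow> 0 + T t y) (at t within {0..})"
    by (intro tendsto_add bounded_c0_semigroup_tendsto[OF T t])
  moreover have "\<forall>\<^sub>F s in at t within {0..}. T s (f s - y) + T s y = T s (f s)"
    using ev by eventually_elim (simp add: linear_diff[OF lin])
  ultimately show ?thesis by (simp add: Lim_transform_eventually)
qed

lemma continuous_on_bounded_c0_semigroup:
  assumes T: "bounded_c0_semigroup T K" and f: "continuous_on {0..} f"
  shows "continuous_on {0..} (\<lambda>s. T s (f s))"
  using f bounded_c0_semigroup_tendsto_comp[OF T] by (auto simp: continuous_on_def)

lemma closed_strong_limit_set:
  fixes T :: "'i \<Rightarrow> 'a::real_normed_vector \<Rightarrow> 'a"
  assumes K: "0 \<le> K"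
    and T: "\<forall>\<^sub>F i in F. linear (T i) \<and> (\<forall>x. norm (T i x) \<le> K * norm x)"
  shows "closed {x. ((\<lambda>i. T i x) \<longlongrightarrow> x) F}"
  unfolding closed_sequential_limits
proof (intro allI impI, elim conjE)
  fix x l assume x_lim: "\<forall>n. x n \<in> {x. ((\<lambda>i. T i x) \<longlongrightarrow> x) F}" and "x \<longlonglongrightarrow> l"
  show "l \<in> {x. ((\<lambda>i. T i x) \<longlongrightarrow> x) F}"
  proof (rule CollectI, rule tendstoI)
    fix e :: real assume e: "e > 0"
    define e' where "e' = e / (3 * (K + 1))"
    have "3 * (K + 1) > 0" using K by simp
    then have e': "e' > 0" and Ke': "(K + 1) * e' = e / 3"
      using e by (simp_all add: e'_def field_simps)
    obtain n where n: "norm (x n - l) < e'"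
      using \<open>x \<longlonglongrightarrow> l\<close> e' unfolding LIMSEQ_def dist_norm by blast
    have "\<forall>\<^sub>F i in F. dist (T i (x n)) (x n) < e / 3"
      using x_lim e by (intro tendstoD) auto
    with T show "\<forall>\<^sub>F i in F. dist (T i l) l < e"
    proof eventually_elim
      case (elim i)
      have "T i l - l = T i (l - x n) + (T i (x n) - x n) + (x n - l)"
        using elim by (simp add: linear_diff)
      then have "norm (T i l - l) \<le> norm (T i (l - x n)) + norm (T i (x n) - x n) + norm (x n - l)"
        by (metis norm_triangle_ineq order_trans add_right_mono)
      also have "\<dots> \<le> K * e' + norm (T i (x n) - x n) + e'"
        using elim n K by (intro add_mono order_trans[OF _ mult_left_mono[of "norm (l - x n)" e']])
          (auto simp: norm_minus_commute)
      finally have "norm (T i l - l) \<le> (K + 1) * e' + dist (T i (x n)) (x n)"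
        by (simp add: dist_norm algebra_simps)
      then show ?case using elim(2) Ke' e unfolding dist_norm by linarith
    qed
  qed
qed

lemma csubspace_strong_limit_set:
  assumes "\<forall>\<^sub>F i in F. bounded_clinear (T i)"
  shows "csubspace {x. ((\<lambda>i. T i x) \<longlongrightarrow> x) F}"
  unfolding csubspace_def
proof (intro conjI ballI allI; clarify)
  show "((\<lambda>i. T i 0) \<longlongrightarrow> 0) F"
    using assms by (rule Lim_transform_eventually[OF tendsto_const eventually_mono])
      (simp add: bounded_clinear_zero)
  show "((\<lambda>i. T i (x + y)) \<longlongrightarrow> x + y) F"
    if "((\<lambda>i. T i x) \<longlongrightarrow> x) F" "((\<lambda>i. T i y) \<longlongrightarrow> y) F" for x y
    using assms by (rule Lim_transform_eventually[OF tendsto_add[OF that] eventually_mono])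
      (simp add: bounded_clinear_add)
  show "((\<lambda>i. T i (c *\<^sub>C x)) \<longlongrightarrow> c *\<^sub>C x) F" if "((\<lambda>i. T i x) \<longlongrightarrow> x) F" for c x
    using assms by (rule Lim_transform_eventually[OF tendsto_scaleC[OF that] eventually_mono])
      (simp add: bounded_clinear_scaleC)
qed

locale exp_stable_semigroup =
  fixes S :: "real \<Rightarrow> 'h::chilbert_space \<Rightarrow> 'h" and M \<alpha> :: real
  assumes c0: "c0_semigroup S" and M_pos: "M > 0" and \<alpha>_pos: "\<alpha> > 0"
    and exp_stable: "\<forall>t\<ge>0. onorm (S t) \<le> M * exp (- \<alpha> * t)"
begin

abbreviation S_adj :: "real \<Rightarrow> 'h \<Rightarrow> 'h" where "S_adj t \<equiv> cadjoint (S t)"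

lemma bounded_clinear_S: "0 \<le> t \<Longrightarrow> bounded_clinear (S t)"
  using c0 by (simp add: c0_semigroup_def)

lemma S_0: "S 0 x = x"
  using c0 by (simp add: c0_semigroup_def)

lemma S_add: "0 \<le> t \<Longrightarrow> 0 \<le> s \<Longrightarrow> S (t + s) x = S t (S s x)"
  using c0 by (simp add: c0_semigroup_def)

lemma norm_S_le: "0 \<le> t \<Longrightarrow> norm (S t x) \<le> M * exp (- \<alpha> * t) * norm x"
  by (meson bounded_clinear_S bounded_clinear_norm_le mult_right_mono norm_ge_zero order_trans
      exp_stable)

lemma exp_decay_le_M:
  assumes "0 \<le> t" "0 \<le> r"
  shows "M * exp (- \<alpha> * t) * r \<le> M * r"
proof -
  have "exp (- \<alpha> * t) \<le> 1" using \<alpha>_pos assms(1) by simp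
  then have "M * exp (- \<alpha> * t) \<le> M * 1" using M_pos by (intro mult_left_mono) auto
  then have "M * exp (- \<alpha> * t) * r \<le> M * 1 * r" using assms(2) by (rule mult_right_mono)
  then show ?thesis by simp
qed

lemma norm_S_le_M: "0 \<le> t \<Longrightarrow> norm (S t x) \<le> M * norm x"
  using norm_S_le exp_decay_le_M by (meson norm_ge_zero order_trans)

lemma bounded_c0_semigroup_S: "bounded_c0_semigroup S M"
  using c0 M_pos norm_S_le_M S_add bounded_clinear_S
  by (simp add: bounded_c0_semigroup_def c0_semigroup_def bounded_clinear_linear)

lemma continuous_on_S: "continuous_on {0..} (\<lambda>s. S s x)"
  using continuous_on_bounded_c0_semigroup[OF bounded_c0_semigroup_S continuous_on_const] .

lemma norm_cinner_S_le:
  assumes "0 \<le> s"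
  shows "cmod (cinner \<phi> (S s x)) \<le> norm \<phi> * (M * norm x)"
proof -
  have "cmod (cinner \<phi> (S s x)) \<le> norm \<phi> * norm (S s x)" by (rule Cauchy_Schwarz_cinner)
  also have "\<dots> \<le> norm \<phi> * (M * norm x)" by (simp add: norm_S_le_M[OF assms] mult_left_mono)
  finally show ?thesis .
qed

lemma bounded_clinear_S_adj: "0 \<le> t \<Longrightarrow> bounded_clinear (S_adj t)"
  by (simp add: bounded_clinear_S bounded_clinear_cadjoint)

lemma cinner_S_adj: "0 \<le> t \<Longrightarrow> cinner (S_adj t y) x = cinner y (S t x)"
  by (simp add: bounded_clinear_S cinner_cadjoint_left)

lemma norm_S_adj_le: "0 \<le> t \<Longrightarrow> norm (S_adj t y) \<le> M * exp (- \<alpha> * t) * norm y"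
  by (meson bounded_clinear_S norm_cadjoint_le mult_right_mono norm_ge_zero order_trans exp_stable)

lemma norm_S_adj_le_M: "0 \<le> t \<Longrightarrow> norm (S_adj t y) \<le> M * norm y"
  using norm_S_adj_le exp_decay_le_M by (meson norm_ge_zero order_trans)

lemma S_adj_0: "S_adj 0 y = y"
  using c0 by (simp add: c0_semigroup_def cadjoint_id)

lemma S_adj_add:
  assumes "0 \<le> t" "0 \<le> s"
  shows "S_adj (t + s) y = S_adj t (S_adj s y)"
proof -
  have "S (t + s) = S s \<circ> S t" using S_add[OF assms(2,1)] by (auto simp: add.commute)
  then show ?thesis using cadjoint_comp[OF bounded_clinear_S bounded_clinear_S] assms by simp
qed

lemma averaged_functional_representable:
  assumes \<delta>: "\<delta> > 0"
  shows "\<exists>\<psi>. \<forall>x. (1/\<delta>) *\<^sub>R integral {0..\<delta>} (\<lambda>s. cinner \<phi> (S s x)) = cinner \<psi> x"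
proof (rule riesz_representation[where K="norm \<phi> * M"])
  have cont: "continuous_on {0..\<delta>} (\<lambda>s. cinner \<phi> (S s x))" for x
    by (rule continuous_on_subset[of "{0..}"])
      (auto intro!: continuous_on_cinner continuous_on_const continuous_on_S)
  have int: "(\<lambda>s. cinner \<phi> (S s x)) integrable_on {0..\<delta>}" for x
    using cont by (rule integrable_continuous_interval)
  show "(1/\<delta>) *\<^sub>R integral {0..\<delta>} (\<lambda>s. cinner \<phi> (S s (x + y)))
      = (1/\<delta>) *\<^sub>R integral {0..\<delta>} (\<lambda>s. cinner \<phi> (S s x))
        + (1/\<delta>) *\<^sub>R integral {0..\<delta>} (\<lambda>s. cinner \<phi> (S s y))" for x y
  proof -
    have "integral {0..\<delta>} (\<lambda>s. cinner \<phi> (S s (x + y)))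
        = integral {0..\<delta>} (\<lambda>s. cinner \<phi> (S s x) + cinner \<phi> (S s y))"
      by (rule integral_cong) (simp add: bounded_clinear_add[OF bounded_clinear_S] cinner_add_right)
    then show ?thesis
      using Henstock_Kurzweil_Integration.integral_add[OF int int] by (simp add: scaleR_add_right)
  qed
  show "(1/\<delta>) *\<^sub>R integral {0..\<delta>} (\<lambda>s. cinner \<phi> (S s (c *\<^sub>C x)))
      = c * ((1/\<delta>) *\<^sub>R integral {0..\<delta>} (\<lambda>s. cinner \<phi> (S s x)))" for c x
  proof -
    have "integral {0..\<delta>} (\<lambda>s. cinner \<phi> (S s (c *\<^sub>C x)))
        = integral {0..\<delta>} (\<lambda>s. c * cinner \<phi> (S s x))"
      by (rule integral_cong) (simp add: bounded_clinear_scaleC[OF bounded_clinear_S] cinner_scaleC_right)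
    then show ?thesis by (simp add: scaleR_conv_of_real mult.left_commute)
  qed
  show "cmod ((1/\<delta>) *\<^sub>R integral {0..\<delta>} (\<lambda>s. cinner \<phi> (S s x))) \<le> norm x * (norm \<phi> * M)" for x
  proof -
    have "norm (integral {0..\<delta>} (\<lambda>s. cinner \<phi> (S s x))) \<le> (norm \<phi> * (M * norm x)) * (\<delta> - 0)"
    proof (rule integral_bound)
      show "continuous_on {0..\<delta>} (\<lambda>s. cinner \<phi> (S s x))" by (rule cont)
      show "norm (cinner \<phi> (S s x)) \<le> norm \<phi> * (M * norm x)" if "s \<in> {0..\<delta>}" for s
        using that norm_cinner_S_le by simp
    qed (use \<delta> in simp)
    then show ?thesis using \<delta> by (simp add: field_simps)
  qed
qed

lemma norm_S_adj_representer_diff_le: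
  assumes \<delta>: "\<delta> > 0" and t: "0 < t" "t < \<delta>"
    and \<psi>: "\<And>x. (1/\<delta>) *\<^sub>R integral {0..\<delta>} (\<lambda>s. cinner \<phi> (S s x)) = cinner \<psi> x"
  shows "norm (S_adj t \<psi> - \<psi>) \<le> 2 * M * norm \<phi> / \<delta> * t"
proof -
  define w where "w = S_adj t \<psi> - \<psi>"
  define k where "k = (\<lambda>s. cinner \<phi> (S s w))"
  define B where "B = norm \<phi> * M * norm w"
  have k_cont: "continuous_on {0..} k"
    unfolding k_def by (intro continuous_on_cinner continuous_on_const continuous_on_S)
  have k_bound: "norm (k s) \<le> B" if "0 \<le> s" for s
    using norm_cinner_S_le[OF that] by (simp add: k_def B_def mult.assoc)
  have k_integral_le: "norm (integral {a..a + t} k) \<le> B * t" if "0 \<le> a" for a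
    using integral_bound[OF _ continuous_on_subset[OF k_cont], of a "a + t" B] k_bound t that
    by auto
  text \<open>Testing \<open>w\<close> against itself turns the shift by \<open>t\<close> into two boundary integrals of
    length \<open>t\<close>.\<close>
  have "cinner w w = cinner \<psi> (S t w) - cinner \<psi> w"
    using t by (simp add: w_def cinner_diff_left cinner_S_adj)
  also have "\<dots> = (1/\<delta>) *\<^sub>R (integral {0..\<delta>} (\<lambda>s. k (s + t)) - integral {0..\<delta>} k)"
  proof -
    have "integral {0..\<delta>} (\<lambda>s. cinner \<phi> (S s (S t w))) = integral {0..\<delta>} (\<lambda>s. k (s + t))"
      using t by (intro integral_cong) (simp add: k_def S_add)
    then show ?thesis by (simp add: \<psi>[symmetric] k_def scaleR_diff_right)
  qed
  also have "\<dots> = (1/\<delta>) *\<^sub>R (integral {\<delta>..\<delta>+t} k - integral {0..t} k)"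
    using t by (simp add: integral_shift_diff[OF k_cont])
  finally have "(norm w)\<^sup>2 = (1/\<delta>) * norm (integral {\<delta>..\<delta>+t} k - integral {0..t} k)"
    using \<delta> by (metis cinner_self norm_of_real abs_power2 real_norm_def norm_scaleR abs_of_pos
        zero_less_divide_1_iff)
  also have "\<dots> \<le> (1/\<delta>) * (B * t + B * t)"
  proof (rule mult_left_mono)
    show "norm (integral {\<delta>..\<delta>+t} k - integral {0..t} k) \<le> B * t + B * t"
      using norm_triangle_ineq4[of "integral {\<delta>..\<delta>+t} k" "integral {0..t} k"]
        k_integral_le[of \<delta>] k_integral_le[of 0] \<delta> by simp
  qed (use \<delta> in simp)
  finally have "norm w * norm w \<le> (2 * M * norm \<phi> / \<delta> * t) * norm w"
    by (simp add: power2_eq_square B_def field_simps)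
  then have "norm w \<le> 2 * M * norm \<phi> / \<delta> * t"
    using \<delta> t M_pos by (cases "norm w = 0") (auto intro: mult_right_le_imp_le)
  then show ?thesis by (simp add: w_def)
qed

lemma S_adj_tendsto_representer:
  assumes \<delta>: "\<delta> > 0"
    and \<psi>: "\<And>x. (1/\<delta>) *\<^sub>R integral {0..\<delta>} (\<lambda>s. cinner \<phi> (S s x)) = cinner \<psi> x"
  shows "((\<lambda>t. S_adj t \<psi>) \<longlongrightarrow> \<psi>) (at_right 0)"
proof -
  have "((\<lambda>t. S_adj t \<psi> - \<psi>) \<longlongrightarrow> 0) (at_right 0)"
  proof (rule Lim_null_comparison)
    show "\<forall>\<^sub>F t in at_right 0. norm (S_adj t \<psi> - \<psi>) \<le> 2 * M * norm \<phi> / \<delta> * t"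
      unfolding eventually_at_right_field
      using \<delta> norm_S_adj_representer_diff_le[OF \<delta> _ _ \<psi>] by auto
    show "((\<lambda>t. 2 * M * norm \<phi> / \<delta> * t) \<longlongrightarrow> 0) (at_right 0)"
      by (intro tendsto_mult_right_zero tendsto_ident_at)
  qed
  then show ?thesis by (simp add: LIM_zero_iff)
qed

text \<open>The vectors on which \<open>S\<^sup>*\<close> is right continuous at \<open>0\<close> form a closed subspace \<open>V\<close>; a vector
  \<open>u\<close> orthogonal to \<open>V\<close> is orthogonal to the representers of all averaged functionals
  \<open>x \<mapsto> \<delta>\<^sup>-\<^sup>1 \<integral>\<^sub>0\<^sup>\<delta> (u, S(s) x) ds\<close>, and letting \<open>\<delta> \<rightarrow> 0\<close> gives \<open>(u, u) = 0\<close>.\<close>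
lemma S_adj_right_continuous: "((\<lambda>h. S_adj h \<phi>) \<longlongrightarrow> \<phi>) (at_right 0)"
proof -
  define V where "V = {x. ((\<lambda>h. S_adj h x) \<longlongrightarrow> x) (at_right 0)}"
  have pos: "\<forall>\<^sub>F h in at_right (0::real). 0 \<le> h"
    using eventually_at_right_less[of 0] by eventually_elim simp
  have "csubspace V"
    unfolding V_def using pos by (intro csubspace_strong_limit_set) (auto elim: eventually_mono
        intro: bounded_clinear_S_adj)
  moreover have "closed V"
    unfolding V_def using M_pos pos
    by (intro closed_strong_limit_set[where K=M])
      (auto elim!: eventually_mono intro: bounded_clinear_linear bounded_clinear_S_adj
        norm_S_adj_le_M)
  ultimately obtain p where pV: "p \<in> V" and orth: "\<And>w. w \<in> V \<Longrightarrow> cinner w (\<phi> - p) = 0"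
    using projection_exists by blast
  define u where "u = \<phi> - p"
  have avg_zero: "(1/\<delta>) *\<^sub>R integral {0..0+\<delta>} (\<lambda>s. cinner u (S s u)) = 0"
    if \<delta>: "\<delta> > 0" for \<delta>
  proof -
    obtain \<psi> where \<psi>: "\<And>x. (1/\<delta>) *\<^sub>R integral {0..\<delta>} (\<lambda>s. cinner u (S s x)) = cinner \<psi> x"
      using averaged_functional_representable[OF \<delta>] by blast
    have "\<psi> \<in> V" using S_adj_tendsto_representer[OF \<delta> \<psi>] by (simp add: V_def)
    then show ?thesis using orth \<psi> by (simp add: u_def)
  qed
  have "((\<lambda>\<delta>. (1/\<delta>) *\<^sub>R integral {0..0+\<delta>} (\<lambda>s. cinner u (S s u))) \<longlongrightarrow> cinner u (S 0 u))
      (at_right 0)"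
  proof (rule tendsto_integral_average_at_right[where b=1])
    show "continuous_on {0..1} (\<lambda>s. cinner u (S s u))"
      by (rule continuous_on_subset[of "{0..}"])
        (auto intro!: continuous_on_cinner continuous_on_const continuous_on_S)
  qed simp
  moreover have "((\<lambda>\<delta>. (1/\<delta>) *\<^sub>R integral {0..0+\<delta>} (\<lambda>s. cinner u (S s u))) \<longlongrightarrow> 0) (at_right 0)"
    by (rule Lim_transform_eventually[OF tendsto_const])
      (use eventually_at_right_less[of 0] avg_zero in \<open>auto elim: eventually_mono\<close>)
  ultimately have "cinner u u = 0"
    using tendsto_unique[OF trivial_limit_at_right_real] by (force simp: S_0)
  then show ?thesis using pV by (simp add: u_def V_def cinner_eq_zero_iff)
qed

lemma bounded_c0_semigroup_S_adj: "bounded_c0_semigroup S_adj M"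
  using M_pos norm_S_adj_le_M S_adj_add bounded_clinear_S_adj S_adj_right_continuous
  by (simp add: bounded_c0_semigroup_def bounded_clinear_linear)

end

section \<open>Conjugation integrals\<close>

context exp_stable_semigroup
begin

lemma continuous_on_conjugation:
  assumes W: "bounded_clinear W"
  shows "continuous_on {0..} (\<lambda>t. S t (W (S_adj t \<phi>)))"
proof -
  have "continuous_on {0..} (\<lambda>t. W (S_adj t \<phi>))"
    using continuous_on_bounded_c0_semigroup[OF bounded_c0_semigroup_S_adj continuous_on_const]
    by (rule continuous_on_compose2[OF bounded_clinear_continuous_on[OF W]]) auto
  then show ?thesis by (rule continuous_on_bounded_c0_semigroup[OF bounded_c0_semigroup_S])
qed

lemma norm_conjugation_le:
  assumes W: "bounded_clinear W" and t: "0 \<le> t"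
  shows "norm (S t (W (S_adj t \<phi>))) \<le> (M\<^sup>2 * onorm W * norm \<phi>) * exp (- (2 * \<alpha>) * t)"
proof -
  have Me: "0 \<le> M * exp (- \<alpha> * t)" using M_pos by simp
  have "norm (S t (W (S_adj t \<phi>))) \<le> M * exp (- \<alpha> * t) * norm (W (S_adj t \<phi>))"
    by (rule norm_S_le[OF t])
  also have "\<dots> \<le> M * exp (- \<alpha> * t) * (onorm W * (M * exp (- \<alpha> * t) * norm \<phi>))"
    using order_trans[OF bounded_clinear_norm_le[OF W]
        mult_left_mono[OF norm_S_adj_le[OF t] bounded_clinear_onorm_nonneg[OF W]]]
    by (rule mult_left_mono[OF _ Me])
  also have "\<dots> = (M\<^sup>2 * onorm W * norm \<phi>) * (exp (- \<alpha> * t) * exp (- \<alpha> * t))"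
    by (simp add: power2_eq_square algebra_simps)
  also have "exp (- \<alpha> * t) * exp (- \<alpha> * t) = exp (- (2 * \<alpha>) * t)"
    by (simp flip: exp_add)
  finally show ?thesis .
qed

lemma tendsto_conjugation_at_top:
  assumes W: "bounded_clinear W"
  shows "((\<lambda>t. S t (W (S_adj t \<phi>))) \<longlongrightarrow> 0) at_top"
proof (rule Lim_null_comparison)
  show "\<forall>\<^sub>F t in at_top. norm (S t (W (S_adj t \<phi>))) \<le> (M\<^sup>2 * onorm W * norm \<phi>) * exp (- (2 * \<alpha>) * t)"
    using eventually_ge_at_top[of "0::real"] by eventually_elim (rule norm_conjugation_le[OF W])
  have "filterlim (\<lambda>t. (2 * \<alpha>) * t) at_top at_top"
    using \<alpha>_pos by (intro filterlim_tendsto_pos_mult_at_top[OF tendsto_const _ filterlim_ident]) simp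
  then have "filterlim (\<lambda>t. - (2 * \<alpha>) * t) at_bot at_top"
    by (simp add: filterlim_uminus_at_bot)
  then show "((\<lambda>t. (M\<^sup>2 * onorm W * norm \<phi>) * exp (- (2 * \<alpha>) * t)) \<longlongrightarrow> 0) at_top"
    by (intro tendsto_mult_right_zero filterlim_compose[OF exp_at_bot])
qed

text \<open>Product rule for \<open>S(h) X S\<^sup>*(h)\<close>; it is how \<open>X\<close> maps \<open>D(A\<^sup>*)\<close> into \<open>D(A)\<close>.\<close>
lemma tendsto_diff_quotient_image:
  assumes X: "bounded_clinear X"
    and X_lim: "((\<lambda>h. (1/h) *\<^sub>R (S h (X (S_adj h \<phi>)) - X \<phi>)) \<longlongrightarrow> z) (at_right 0)"
    and adj_lim: "((\<lambda>h. (1/h) *\<^sub>R (S_adj h \<phi> - \<phi>)) \<longlongrightarrow> a) (at_right 0)"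
  shows "((\<lambda>h. (1/h) *\<^sub>R (S h (X \<phi>) - X \<phi>)) \<longlongrightarrow> z - X a) (at_right 0)"
proof -
  define d where "d = (\<lambda>h. (1/h) *\<^sub>R (S_adj h \<phi> - \<phi>))"
  have "((\<lambda>h. X (d h)) \<longlongrightarrow> X a) (at 0 within {0..})"
    using bounded_clinear_tendsto[OF X adj_lim] by (simp add: d_def at_within_Ici_at_right)
  then have "((\<lambda>h. S h (X (d h))) \<longlongrightarrow> S 0 (X a)) (at 0 within {0..})"
    by (rule bounded_c0_semigroup_tendsto_comp[OF bounded_c0_semigroup_S order_refl])
  then have "((\<lambda>h. (1/h) *\<^sub>R (S h (X (S_adj h \<phi>)) - X \<phi>) - S h (X (d h))) \<longlongrightarrow> z - X a)
      (at_right 0)"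
    by (intro tendsto_diff X_lim) (simp add: S_0 at_within_Ici_at_right)
  moreover have "\<forall>\<^sub>F h in at_right 0.
      (1/h) *\<^sub>R (S h (X (S_adj h \<phi>)) - X \<phi>) - S h (X (d h)) = (1/h) *\<^sub>R (S h (X \<phi>) - X \<phi>)"
    using eventually_at_right_less[of 0]
  proof eventually_elim
    case (elim h)
    have "S_adj h \<phi> = \<phi> + h *\<^sub>R d h" using elim by (simp add: d_def)
    then have "S h (X (S_adj h \<phi>)) = S h (X \<phi>) + h *\<^sub>R S h (X (d h))"
      using elim by (simp add: bounded_clinear_add[OF X] bounded_clinear_scaleR[OF X]
          bounded_clinear_add[OF bounded_clinear_S] bounded_clinear_scaleR[OF bounded_clinear_S])
    then show ?case using elim by (simp add: algebra_simps)
  qed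
  ultimately show ?thesis by (rule Lim_transform_eventually)
qed

end

locale separable_exp_stable_semigroup = exp_stable_semigroup S M \<alpha>
  for S :: "real \<Rightarrow> 'h::{chilbert_space, second_countable_topology} \<Rightarrow> 'h" and M \<alpha>
begin

lemma integrable_conjugation:
  assumes W: "bounded_clinear W"
  shows "integrable (lebesgue_on {0..}) (\<lambda>t. S t (W (S_adj t \<phi>)))"
proof (rule Bochner_Integration.integrable_bound
    [where f="\<lambda>t. (M\<^sup>2 * onorm W * norm \<phi>) * exp (- (2 * \<alpha>) * t)"])
  show "integrable (lebesgue_on {0..}) (\<lambda>t. (M\<^sup>2 * onorm W * norm \<phi>) * exp (- (2 * \<alpha>) * t))"
    using \<alpha>_pos by (intro integrable.intros[OF has_bochner_integral_exp_decay]) simp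
  show "(\<lambda>t. S t (W (S_adj t \<phi>))) \<in> borel_measurable (lebesgue_on {0..})"
    by (rule continuous_imp_measurable_on_sets_lebesgue[OF continuous_on_conjugation[OF W]
          sets_lebesgue_atLeast])
  show "AE t in lebesgue_on {0..}.
      norm (S t (W (S_adj t \<phi>))) \<le> norm ((M\<^sup>2 * onorm W * norm \<phi>) * exp (- (2 * \<alpha>) * t))"
    using norm_conjugation_le[OF W] bounded_clinear_onorm_nonneg[OF W]
    by (intro AE_I2) (auto intro: order_trans)
qed

text \<open>If \<open>V \<psi> = \<integral>\<^sub>0\<^sup>\<infinity> S(t) W S\<^sup>*(t) \<psi> dt\<close> for all \<open>\<psi>\<close>, then \<open>S(h) V S\<^sup>*(h) \<phi>\<close> is the same
  integral over \<open>[h, \<infinity>)\<close>, by the semigroup law.\<close>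
lemma has_integral_conjugation_Icc:
  assumes W: "bounded_clinear W"
    and V: "\<And>\<psi>. has_bochner_integral (lebesgue_on {0..}) (\<lambda>t. S t (W (S_adj t \<psi>))) (V \<psi>)"
    and h: "h > 0"
  shows "((\<lambda>t. cinner y (S t (W (S_adj t \<phi>)))) has_integral
      (cinner y (V \<phi>) - cinner y (S h (V (S_adj h \<phi>))))) {0..h}"
proof (rule has_integral_Icc_of_tails[OF _ _ h])
  show "has_bochner_integral (lebesgue_on {0..}) (\<lambda>t. cinner y (S t (W (S_adj t \<phi>)))) (cinner y (V \<phi>))"
    by (rule has_bochner_integral_bounded_linear[OF bounded_linear_cinner_right V])
  have "bounded_linear (\<lambda>z. cinner y (S h z))"
    using h by (intro bounded_linear_compose[OF bounded_linear_cinner_right]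
        bounded_clinear_imp_bounded_linear bounded_clinear_S) simp
  from has_bochner_integral_bounded_linear[OF this V]
  have hb: "has_bochner_integral (lebesgue_on {0..})
      (\<lambda>t. cinner y (S h (S t (W (S_adj t (S_adj h \<phi>)))))) (cinner y (S h (V (S_adj h \<phi>))))" .
  have eq: "cinner y (S h (S t (W (S_adj t (S_adj h \<phi>)))))
      = cinner y (S (h + t) (W (S_adj (h + t) \<phi>)))" if "t \<in> space (lebesgue_on {0..})" for t
  proof -
    have "0 \<le> t" using that by simp
    then have "S_adj (h + t) \<phi> = S_adj t (S_adj h \<phi>)"
      using S_adj_add[of t h \<phi>] h by (simp add: add.commute)
    then show ?thesis using \<open>0 \<le> t\<close> h by (simp add: S_add)
  qed
  show "has_bochner_integral (lebesgue_on {0..})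
      (\<lambda>t. cinner y (S (h + t) (W (S_adj (h + t) \<phi>)))) (cinner y (S h (V (S_adj h \<phi>))))"
    using iffD1[OF has_bochner_integral_cong[OF refl eq refl] hb] .
qed

text \<open>The estimate holds for \<open>(y, \<cdot>)\<close> uniformly in the test vector \<open>y\<close>, hence in norm.\<close>
lemma norm_conjugation_integral_diff_quotient_le:
  assumes W: "bounded_clinear W"
    and V: "\<And>\<psi>. has_bochner_integral (lebesgue_on {0..}) (\<lambda>t. S t (W (S_adj t \<psi>))) (V \<psi>)"
    and h: "h > 0" and c: "0 \<le> c"
    and close: "\<And>s. s \<in> {0..h} \<Longrightarrow> norm (S s (W (S_adj s \<phi>)) - W \<phi>) \<le> c"
  shows "norm ((1/h) *\<^sub>R (S h (V (S_adj h \<phi>)) - V \<phi>) + W \<phi>) \<le> c"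
proof (rule norm_le_if_cinner_le[OF c])
  fix y
  define J where "J = cinner y (V \<phi>) - cinner y (S h (V (S_adj h \<phi>)))"
  have "norm ((1/h) *\<^sub>R J - cinner y (S 0 (W (S_adj 0 \<phi>)))) \<le> norm y * c"
  proof (rule norm_average_minus_le[OF _ h])
    show "((\<lambda>t. cinner y (S t (W (S_adj t \<phi>)))) has_integral J) {0..h}"
      unfolding J_def by (rule has_integral_conjugation_Icc[OF W V h])
    show "norm (cinner y (S s (W (S_adj s \<phi>))) - cinner y (S 0 (W (S_adj 0 \<phi>)))) \<le> norm y * c"
      if "s \<in> {0..h}" for s
      using Cauchy_Schwarz_cinner[of y "S s (W (S_adj s \<phi>)) - W \<phi>"] close[OF that]
        mult_left_mono[OF close[OF that] norm_ge_zero[of y]]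
      by (simp add: cinner_diff_right S_0 S_adj_0)
  qed
  moreover have "cinner y ((1/h) *\<^sub>R (S h (V (S_adj h \<phi>)) - V \<phi>) + W \<phi>)
      = - ((1/h) *\<^sub>R J - cinner y (S 0 (W (S_adj 0 \<phi>))))"
    by (simp add: J_def S_0 S_adj_0 cinner_add_right cinner_scaleR_right cinner_diff_right
        scaleR_conv_of_real algebra_simps)
  ultimately show "cmod (cinner y ((1/h) *\<^sub>R (S h (V (S_adj h \<phi>)) - V \<phi>) + W \<phi>)) \<le> norm y * c"
    by (metis norm_minus_cancel)
qed

lemma tendsto_conjugation_integral_diff_quotient:
  assumes W: "bounded_clinear W"
    and V: "\<And>\<psi>. has_bochner_integral (lebesgue_on {0..}) (\<lambda>t. S t (W (S_adj t \<psi>))) (V \<psi>)"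
  shows "((\<lambda>h. (1/h) *\<^sub>R (S h (V (S_adj h \<phi>)) - V \<phi>)) \<longlongrightarrow> - W \<phi>) (at_right 0)"
proof -
  define F where "F = (\<lambda>t. S t (W (S_adj t \<phi>)))"
  have "(F \<longlongrightarrow> F 0) (at 0 within {0..})"
    using continuous_on_conjugation[OF W] unfolding continuous_on_def F_def by auto
  then have F_lim: "(F \<longlongrightarrow> W \<phi>) (at 0 within {0..})" by (simp add: F_def S_0 S_adj_0)
  have "((\<lambda>h. (1/h) *\<^sub>R (S h (V (S_adj h \<phi>)) - V \<phi>) + W \<phi>) \<longlongrightarrow> 0) (at_right 0)"
  proof (rule tendstoI)
    fix e :: real assume e: "e > 0"
    obtain d where d: "d > 0"
      and dF: "\<And>s. s \<in> {0..} \<Longrightarrow> s \<noteq> 0 \<and> dist s 0 < d \<Longrightarrow> dist (F s) (W \<phi>) < e/2"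
      using F_lim e unfolding tendsto_iff eventually_at by (metis half_gt_zero)
    have F_close: "norm (F s - W \<phi>) \<le> e/2" if "0 \<le> s" "s < d" for s
      using that dF[of s] e by (cases "s = 0") (auto simp: dist_norm F_def S_0 S_adj_0)
    have "norm ((1/h) *\<^sub>R (S h (V (S_adj h \<phi>)) - V \<phi>) + W \<phi>) \<le> e/2" if "0 < h" "h < d" for h
      using that e F_close
      by (intro norm_conjugation_integral_diff_quotient_le[OF W V]) (auto simp: F_def)
    then show "\<forall>\<^sub>F h in at_right 0. dist ((1/h) *\<^sub>R (S h (V (S_adj h \<phi>)) - V \<phi>) + W \<phi>) 0 < e"
      unfolding eventually_at_right_field using d e by (intro exI[of _ d]) fastforce
  qed
  then have "((\<lambda>h. ((1/h) *\<^sub>R (S h (V (S_adj h \<phi>)) - V \<phi>) + W \<phi>) - W \<phi>) \<longlongrightarrow> 0 - W \<phi>) (at_right 0)"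
    by (intro tendsto_diff tendsto_const)
  then show ?thesis by simp
qed

lemma continuous_on_cinner_conjugation:
  assumes W: "bounded_clinear W" and a: "0 \<le> a"
  shows "continuous_on {a..b} (\<lambda>t. cinner y (S t (W (S_adj t \<phi>))))"
  by (rule continuous_on_subset[of "{0..}"])
    (use a in \<open>auto intro!: continuous_on_cinner continuous_on_const continuous_on_conjugation[OF W]\<close>)

lemma tendsto_conjugation_plus_integral_diff_quotient:
  fixes y \<phi> :: 'h
  assumes W: "bounded_clinear W" and Y: "bounded_clinear Y"
    and Y_lim: "\<And>\<phi>. ((\<lambda>h. (1/h) *\<^sub>R (S h (Y (S_adj h \<phi>)) - Y \<phi>)) \<longlongrightarrow> - W \<phi>) (at_right 0)"
    and t: "0 \<le> t"
  defines "p \<equiv> \<lambda>T. cinner y (S T (Y (S_adj T \<phi>))) + integral {0..T} (\<lambda>s. cinner y (S s (W (S_adj s \<phi>))))"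
  shows "((\<lambda>h. (1/h) *\<^sub>R (p (t + h) - p t)) \<longlongrightarrow> 0) (at_right 0)"
proof -
  define g where "g = (\<lambda>s. cinner y (S s (W (S_adj s \<phi>))))"
  define \<psi> where "\<psi> = S_adj t \<phi>"
  have avg: "((\<lambda>h. (1/h) *\<^sub>R integral {t..t+h} g) \<longlongrightarrow> g t) (at_right 0)"
    using tendsto_integral_average_at_right[OF continuous_on_cinner_conjugation[OF W t, of "t + 1"]]
    by (simp add: g_def)
  have "((\<lambda>h. cinner y (S t ((1/h) *\<^sub>R (S h (Y (S_adj h \<psi>)) - Y \<psi>)))
      + (1/h) *\<^sub>R integral {t..t+h} g) \<longlongrightarrow> cinner y (S t (- W \<psi>)) + g t) (at_right 0)"
    by (intro tendsto_add tendsto_cinner tendsto_const Y_lim avg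
        bounded_clinear_tendsto[OF bounded_clinear_S[OF t]])
  moreover have "cinner y (S t (- W \<psi>)) + g t = 0"
    by (simp add: g_def \<psi>_def bounded_clinear_minus[OF bounded_clinear_S[OF t]] cinner_minus_right)
  moreover have "\<forall>\<^sub>F h in at_right 0.
      cinner y (S t ((1/h) *\<^sub>R (S h (Y (S_adj h \<psi>)) - Y \<psi>))) + (1/h) *\<^sub>R integral {t..t+h} g
      = (1/h) *\<^sub>R (p (t + h) - p t)"
    using eventually_at_right_less[of 0]
  proof eventually_elim
    case (elim h)
    have S_th: "S (t + h) z = S t (S h z)" for z using S_add[of t h z] t elim by simp
    have S_adj_th: "S_adj (t + h) \<phi> = S_adj h \<psi>"
      using S_adj_add[of h t \<phi>] t elim by (simp add: \<psi>_def add.commute)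
    have integral_th: "integral {0..t+h} g = integral {0..t} g + integral {t..t+h} g"
      using t elim integrable_continuous_interval[OF continuous_on_cinner_conjugation[OF W, of 0 "t + h"]]
      by (intro Henstock_Kurzweil_Integration.integral_combine[symmetric]) (auto simp: g_def)
    define v where "v = S h (Y (S_adj h \<psi>)) - Y \<psi>"
    have "p (t + h) - p t = cinner y (S t v) + integral {t..t+h} g"
      using integral_th
      by (simp add: p_def g_def S_th S_adj_th v_def \<psi>_def cinner_diff_right
          bounded_clinear_diff[OF bounded_clinear_S[OF t]])
    moreover have "cinner y (S t ((1/h) *\<^sub>R v)) = (1/h) *\<^sub>R cinner y (S t v)"
      by (simp add: bounded_clinear_scaleR[OF bounded_clinear_S[OF t]] cinner_scaleR_right
          scaleR_conv_of_real)
    ultimately show ?case by (simp add: v_def scaleR_add_right)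
  qed
  ultimately show ?thesis by (auto elim: Lim_transform_eventually)
qed

lemma conjugation_plus_integral_constant:
  assumes W: "bounded_clinear W" and Y: "bounded_clinear Y"
    and Y_lim: "\<And>\<phi>. ((\<lambda>h. (1/h) *\<^sub>R (S h (Y (S_adj h \<phi>)) - Y \<phi>)) \<longlongrightarrow> - W \<phi>) (at_right 0)"
    and T: "0 \<le> T"
  shows "cinner y (S T (Y (S_adj T \<phi>))) + integral {0..T} (\<lambda>t. cinner y (S t (W (S_adj t \<phi>))))
    = cinner y (Y \<phi>)"
proof -
  define p where "p = (\<lambda>T. cinner y (S T (Y (S_adj T \<phi>)))
    + integral {0..T} (\<lambda>t. cinner y (S t (W (S_adj t \<phi>)))))"
  have "continuous_on {0..T} p"
    unfolding p_def
    by (intro continuous_on_add indefinite_integral_continuous_1 integrable_continuous_interval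
        continuous_on_cinner_conjugation[OF Y] continuous_on_cinner_conjugation[OF W]) simp_all
  moreover have "((\<lambda>h. (1/h) *\<^sub>R (p (t + h) - p t)) \<longlongrightarrow> 0) (at_right 0)" if "0 \<le> t" for t
    unfolding p_def by (rule tendsto_conjugation_plus_integral_diff_quotient[OF W Y Y_lim that])
  ultimately have "p T = p 0" using T by (rule right_derivative_zero_imp_constant)
  then show ?thesis by (simp add: p_def S_0 S_adj_0)
qed

lemma has_bochner_integral_conjugation_if_diff_quotient:
  assumes W: "bounded_clinear W" and Y: "bounded_clinear Y"
    and Y_lim: "\<And>\<phi>. ((\<lambda>h. (1/h) *\<^sub>R (S h (Y (S_adj h \<phi>)) - Y \<phi>)) \<longlongrightarrow> - W \<phi>) (at_right 0)"
  shows "has_bochner_integral (lebesgue_on {0..}) (\<lambda>t. S t (W (S_adj t \<phi>))) (Y \<phi>)"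
proof -
  define F where "F = (\<lambda>t. S t (W (S_adj t \<phi>)))"
  define I where "I = integral\<^sup>L (lebesgue_on {0..}) F"
  have F_int: "has_bochner_integral (lebesgue_on {0..}) F I"
    unfolding I_def F_def by (rule has_bochner_integral_integrable[OF integrable_conjugation[OF W]])
  have "cinner y I = cinner y (Y \<phi>)" for y
  proof -
    have "integrable (lebesgue_on {0..}) (\<lambda>t. cinner y (F t))"
      using has_bochner_integral_bounded_linear[OF bounded_linear_cinner_right F_int]
      by (rule integrable.intros)
    from tendsto_integral_Icc_at_top[OF this]
    have "((\<lambda>T. integral {0..T} (\<lambda>t. cinner y (F t))) \<longlongrightarrow> cinner y I) at_top"
      using has_bochner_integral_integral_eq[OF
          has_bochner_integral_bounded_linear[OF bounded_linear_cinner_right F_int]] by simp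
    moreover have "((\<lambda>T. cinner y (Y \<phi>) - cinner y (S T (Y (S_adj T \<phi>))))
        \<longlongrightarrow> cinner y (Y \<phi>) - cinner y 0) at_top"
      by (intro tendsto_diff tendsto_const tendsto_cinner tendsto_conjugation_at_top[OF Y])
    moreover have "\<forall>\<^sub>F T in at_top. cinner y (Y \<phi>) - cinner y (S T (Y (S_adj T \<phi>)))
        = integral {0..T} (\<lambda>t. cinner y (F t))"
      using eventually_ge_at_top[of "0::real"]
      by eventually_elim (simp add: F_def conjugation_plus_integral_constant[OF W Y Y_lim, symmetric])
    ultimately show ?thesis
      using tendsto_unique[OF trivial_limit_at_top_linorder] Lim_transform_eventually by force
  qed
  then have "I = Y \<phi>" by (rule cinner_eqI)
  then show ?thesis using F_int by (simp add: F_def)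
qed

end

section \<open>Positive semi-definite forms and the trace norm\<close>

lemma pos_semidef_bounded_clinear: "pos_semidef R \<Longrightarrow> bounded_clinear R"
  by (simp add: pos_semidef_def symmetric_op_def)

lemma pos_semidef_sym: "pos_semidef R \<Longrightarrow> cinner (R x) y = cinner x (R y)"
  by (simp add: pos_semidef_def symmetric_op_def)

lemma pos_semidef_cnj: "pos_semidef R \<Longrightarrow> cnj (cinner x (R y)) = cinner y (R x)"
  by (metis cinner_commute pos_semidef_sym)

lemma pos_semidef_real: "pos_semidef R \<Longrightarrow> cinner x (R x) = of_real (Re (cinner x (R x)))"
  unfolding pos_semidef_def by (metis Reals_cases Re_complex_of_real)

lemma pos_semidef_nonneg: "pos_semidef R \<Longrightarrow> 0 \<le> Re (cinner x (R x))"
  unfolding pos_semidef_def by blast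

lemma pos_semidef_id: "pos_semidef (id :: 'a::complex_inner \<Rightarrow> 'a)"
  using bounded_clinear_id by (auto simp: pos_semidef_def symmetric_op_def cinner_self)

text \<open>Expand the form on \<open>f - u e\<close>, where the unimodular \<open>u\<close> rotates \<open>(f, R e)\<close> onto the positive
  real axis.\<close>
lemma cmod_cinner_pos_semidef_le:
  assumes R: "pos_semidef R"
  shows "cmod (cinner f (R e)) \<le> (Re (cinner e (R e)) + Re (cinner f (R f))) / 2"
proof (cases "cinner f (R e) = 0")
  case True
  then show ?thesis using pos_semidef_nonneg[OF R, of e] pos_semidef_nonneg[OF R, of f] by simp
next
  case False
  define c where "c = cinner f (R e)"
  define u where "u = cnj c / of_real (cmod c)"
  have c0: "cmod c > 0" using False by (simp add: c_def)
  have c_cnj: "c * cnj c = of_real ((cmod c)\<^sup>2)" by (metis cnj_mult_self mult.commute)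
  have R_lin: "bounded_clinear R" using R by (rule pos_semidef_bounded_clinear)
  define v where "v = f - u *\<^sub>C e"
  have "cinner v (R v)
      = cinner f (R f) - u * cinner f (R e) - cnj u * cinner e (R f) + cnj u * u * cinner e (R e)"
    by (simp add: v_def bounded_clinear_diff[OF R_lin] bounded_clinear_scaleC[OF R_lin]
        cinner_diff_left cinner_diff_right cinner_scaleC_left cinner_scaleC_right algebra_simps)
  also have "cinner e (R f) = cnj c" using pos_semidef_cnj[OF R, of f e] by (simp add: c_def)
  also have "u * cinner f (R e) = of_real (cmod c)"
    using c0 c_cnj by (simp add: u_def c_def[symmetric] power2_eq_square field_simps)
  also have "cnj u * cnj c = of_real (cmod c)"
    using c0 c_cnj by (simp add: u_def power2_eq_square field_simps)
  also have "cnj u * u = 1"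
    using c0 c_cnj by (simp add: u_def power2_eq_square field_simps)
  finally have "Re (cinner v (R v)) = Re (cinner f (R f)) - 2 * cmod c + Re (cinner e (R e))"
    by simp
  with pos_semidef_nonneg[OF R, of v] show ?thesis by (simp add: c_def)
qed

lemma pos_semidef_null_right:
  assumes R: "pos_semidef R" and a: "cinner a (R a) = 0"
  shows "cinner w (R a) = 0"
proof -
  define q where "q = Re (cinner w (R w))"
  have q: "0 \<le> q" using pos_semidef_nonneg[OF R] by (simp add: q_def)
  have R_lin: "bounded_clinear R" using R by (rule pos_semidef_bounded_clinear)
  have "cmod (cinner w (R a)) \<le> 0 + e" if e: "e > 0" for e
  proof -
    define s where "s = 2 * e / (q + 1)"
    have s: "s > 0" using e q by (simp add: s_def)
    have "s * cmod (cinner w (R a)) = cmod (cinner (s *\<^sub>R w) (R a))"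
      using s by (simp add: cinner_scaleR_left norm_mult)
    also have "\<dots> \<le> (Re (cinner a (R a)) + Re (cinner (s *\<^sub>R w) (R (s *\<^sub>R w)))) / 2"
      by (rule cmod_cinner_pos_semidef_le[OF R])
    also have "\<dots> = s * (s * q / 2)"
      using a by (simp add: bounded_clinear_scaleR[OF R_lin] cinner_scaleR_left cinner_scaleR_right
          q_def)
    finally have "cmod (cinner w (R a)) \<le> s * q / 2" using s by simp
    also have "s * q / 2 = e * (q / (q + 1))" using q by (simp add: s_def field_simps)
    also have "\<dots> \<le> e" using e q by (intro mult_left_le) auto
    finally show ?thesis by simp
  qed
  then show ?thesis using field_le_epsilon[of "cmod (cinner w (R a))" 0] by simp
qed

lemma pos_semidef_null_left:
  assumes R: "pos_semidef R" and a: "cinner a (R a) = 0"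
  shows "cinner a (R w) = 0"
  using pos_semidef_null_right[OF R a, of w] pos_semidef_cnj[OF R, of w a] by simp

lemma pos_semidef_null_add_scaleC:
  assumes R: "pos_semidef R" and a: "cinner a (R a) = 0" and b: "cinner b (R b) = 0"
  shows "cinner (a + c *\<^sub>C b) (R (a + c *\<^sub>C b)) = 0"
  using pos_semidef_null_left[OF R a] pos_semidef_null_left[OF R b]
  by (simp add: cinner_add_left cinner_scaleC_left)

definition orthonormal_wrt :: "('a::complex_inner \<Rightarrow> 'a) \<Rightarrow> nat \<Rightarrow> (nat \<Rightarrow> 'a) \<Rightarrow> bool" where
  "orthonormal_wrt R m h \<longleftrightarrow> (\<forall>j<m. \<forall>l<m. cinner (h j) (R (h l)) = (if j = l then 1 else 0))"

definition residual_wrt :: "('a::complex_inner \<Rightarrow> 'a) \<Rightarrow> nat \<Rightarrow> (nat \<Rightarrow> 'a) \<Rightarrow> 'a \<Rightarrow> 'a" where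
  "residual_wrt R m h x = x - (\<Sum>j<m. cinner (h j) (R x) *\<^sub>C h j)"

lemma orthonormal_wrt_id: "orthonormal_wrt id m e \<longleftrightarrow> orthonormal_fam m e"
  by (simp add: orthonormal_wrt_def orthonormal_fam_def)

lemma cinner_R_sum_right:
  assumes "bounded_clinear R"
  shows "cinner y (R (\<Sum>j<m. b j *\<^sub>C h j)) = (\<Sum>j<m. b j * cinner y (R (h j)))"
  by (simp add: bounded_clinear_sum[OF assms] bounded_clinear_scaleC[OF assms] cinner_sum_right
      cinner_scaleC_right)

lemma orthonormal_wrt_coeff:
  assumes R: "bounded_clinear R" and h: "orthonormal_wrt R m h" and j: "j < m"
  shows "cinner (h j) (R (\<Sum>l<m. b l *\<^sub>C h l)) = b j"
proof -
  have "cinner (h j) (R (\<Sum>l<m. b l *\<^sub>C h l)) = (\<Sum>l<m. b l * (if j = l then 1 else 0))"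
    using h j by (simp add: cinner_R_sum_right[OF R] orthonormal_wrt_def)
  also have "\<dots> = b j" using j by (simp add: if_distrib cong: if_cong)
  finally show ?thesis .
qed

lemma orthonormal_wrt_cinner_sum:
  assumes R: "bounded_clinear R" and h: "orthonormal_wrt R m h"
  shows "cinner (\<Sum>j<m. a j *\<^sub>C h j) (R (\<Sum>l<m. b l *\<^sub>C h l)) = (\<Sum>j<m. cnj (a j) * b j)"
  by (simp add: cinner_sum_left cinner_scaleC_left orthonormal_wrt_coeff[OF R h])

lemma cinner_residual_wrt:
  assumes R: "bounded_clinear R" and h: "orthonormal_wrt R m h" and j: "j < m"
  shows "cinner (h j) (R (residual_wrt R m h x)) = 0"
  by (simp add: residual_wrt_def bounded_clinear_diff[OF R] cinner_diff_right
      orthonormal_wrt_coeff[OF R h j])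

lemma residual_wrt_add_scaleC:
  assumes R: "bounded_clinear R"
  shows "residual_wrt R m h (x + c *\<^sub>C y) = residual_wrt R m h x + c *\<^sub>C residual_wrt R m h y"
proof -
  have "(\<Sum>j<m. cinner (h j) (R (x + c *\<^sub>C y)) *\<^sub>C h j)
      = (\<Sum>j<m. cinner (h j) (R x) *\<^sub>C h j) + c *\<^sub>C (\<Sum>j<m. cinner (h j) (R y) *\<^sub>C h j)"
    by (simp add: bounded_clinear_add[OF R] bounded_clinear_scaleC[OF R] cinner_add_right
        cinner_scaleC_right scaleC_add_left sum.distrib scaleC_sum_right scaleC_scaleC)
  then show ?thesis by (simp add: residual_wrt_def scaleC_diff_right algebra_simps)
qed

lemma parseval_wrt:
  assumes R: "pos_semidef R" and h: "orthonormal_wrt R m h"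
  shows "Re (cinner x (R x)) = Re (cinner (residual_wrt R m h x) (R (residual_wrt R m h x)))
    + (\<Sum>j<m. (cmod (cinner (h j) (R x)))\<^sup>2)"
proof -
  have R_lin: "bounded_clinear R" using R by (rule pos_semidef_bounded_clinear)
  define z where "z = residual_wrt R m h x"
  define s where "s = (\<Sum>j<m. cinner (h j) (R x) *\<^sub>C h j)"
  have x: "x = z + s" by (simp add: z_def s_def residual_wrt_def)
  have sz: "cinner s (R z) = 0"
    by (simp add: s_def z_def cinner_sum_left cinner_scaleC_left cinner_residual_wrt[OF R_lin h])
  have zs: "cinner z (R s) = 0" using pos_semidef_cnj[OF R, of s z] sz by simp
  have ss: "cinner s (R s) = (\<Sum>j<m. of_real ((cmod (cinner (h j) (R x)))\<^sup>2))"
    unfolding s_def orthonormal_wrt_cinner_sum[OF R_lin h] by (simp add: cnj_mult_self)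
  have "cinner x (R x) = cinner z (R z) + cinner z (R s) + cinner s (R z) + cinner s (R s)"
    by (simp add: x bounded_clinear_add[OF R_lin] cinner_add_left cinner_add_right)
  then show ?thesis unfolding z_def[symmetric] by (simp add: sz zs ss)
qed

lemma bessel_inequality:
  assumes "orthonormal_fam n e"
  shows "(\<Sum>i<n. (cmod (cinner (e i) y))\<^sup>2) \<le> (norm y)\<^sup>2"
  using parseval_wrt[OF pos_semidef_id, of n e y] pos_semidef_nonneg[OF pos_semidef_id]
    assms by (simp add: orthonormal_wrt_id cinner_self_Re)

lemma orthonormal_wrt_extend:
  assumes R: "pos_semidef R" and h: "orthonormal_wrt R m h"
    and r: "r = residual_wrt R m h x" and q: "Re (cinner r (R r)) > 0"
  defines "e \<equiv> (1 / sqrt (Re (cinner r (R r)))) *\<^sub>R r"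
  shows "orthonormal_wrt R (Suc m) (h(m := e))"
    and "\<And>y. residual_wrt R (Suc m) (h(m := e)) y = residual_wrt R m h y - cinner e (R y) *\<^sub>C e"
    and "cinner e (R r) = of_real (sqrt (Re (cinner r (R r))))"
proof -
  have R_lin: "bounded_clinear R" using R by (rule pos_semidef_bounded_clinear)
  define s where "s = sqrt (Re (cinner r (R r)))"
  have s: "s > 0" and ss: "cinner r (R r) = of_real s * of_real s"
    using q pos_semidef_real[OF R, of r] by (simp_all add: s_def flip: of_real_mult)
  have he: "cinner (h j) (R e) = 0" if "j < m" for j
    using cinner_residual_wrt[OF R_lin h that, of x]
    by (simp add: e_def r bounded_clinear_scaleR[OF R_lin] cinner_scaleR_right)
  have eh: "cinner e (R (h j)) = 0" if "j < m" for j
    using pos_semidef_cnj[OF R, of "h j" e] he[OF that] by simp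
  have ee: "cinner e (R e) = 1"
    using s by (simp add: e_def s_def[symmetric] bounded_clinear_scaleR[OF R_lin]
        cinner_scaleR_right cinner_scaleR_left ss)
  show "orthonormal_wrt R (Suc m) (h(m := e))"
    unfolding orthonormal_wrt_def
  proof (intro allI impI)
    fix j l assume "j < Suc m" "l < Suc m"
    then show "cinner ((h(m := e)) j) (R ((h(m := e)) l)) = (if j = l then 1 else 0)"
      using h he eh ee by (cases "j = m"; cases "l = m") (auto simp: orthonormal_wrt_def less_Suc_eq)
  qed
  show "residual_wrt R (Suc m) (h(m := e)) y = residual_wrt R m h y - cinner e (R y) *\<^sub>C e" for y
  proof -
    have "(\<Sum>j<m. cinner ((h(m := e)) j) (R y) *\<^sub>C (h(m := e)) j) = (\<Sum>j<m. cinner (h j) (R y) *\<^sub>C h j)"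
      by (intro sum.cong) auto
    then show ?thesis by (simp add: residual_wrt_def algebra_simps)
  qed
  show "cinner e (R r) = of_real (sqrt (Re (cinner r (R r))))"
    using s by (simp add: e_def s_def[symmetric] cinner_scaleR_left ss)
qed

text \<open>Extending the family by the normalized residual \<open>e\<close> of \<open>x\<close> removes the
  \<open>r\<close>-component of any residual of the form \<open>z + c r\<close> with \<open>z\<close> null: the \<open>R\<close>-coefficient of \<open>e\<close>
  in it is exactly \<open>c \<surd>(r, R r)\<close>.\<close>
lemma residual_wrt_extend:
  assumes R: "pos_semidef R" and h: "orthonormal_wrt R m h"
    and r: "r = residual_wrt R m h x" and q: "Re (cinner r (R r)) > 0"
    and res: "residual_wrt R m h y = z + c *\<^sub>C r" and z_null: "cinner z (R z) = 0"
  defines "e \<equiv> (1 / sqrt (Re (cinner r (R r)))) *\<^sub>R r"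
  shows "residual_wrt R (Suc m) (h(m := e)) y = z"
proof -
  have R_lin: "bounded_clinear R" using R by (rule pos_semidef_bounded_clinear)
  note ext = orthonormal_wrt_extend[OF R h r q, folded e_def]
  have eh: "cinner e (R (h j)) = 0" if "j < m" for j
    using ext(1)[unfolded orthonormal_wrt_def, rule_format, of m j] that by simp
  have "y = residual_wrt R m h y + (\<Sum>j<m. cinner (h j) (R y) *\<^sub>C h j)"
    unfolding residual_wrt_def by simp
  then have "y = z + c *\<^sub>C r + (\<Sum>j<m. cinner (h j) (R y) *\<^sub>C h j)"
    unfolding res .
  then have "cinner e (R y) = cinner e (R (z + c *\<^sub>C r + (\<Sum>j<m. cinner (h j) (R y) *\<^sub>C h j)))"
    by (rule arg_cong)
  also have "\<dots> = c * of_real (sqrt (Re (cinner r (R r))))"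
    using pos_semidef_null_right[OF R z_null, of e] ext(3) eh
    by (simp add: bounded_clinear_add[OF R_lin] bounded_clinear_scaleC[OF R_lin] cinner_add_right
        cinner_scaleC_right cinner_R_sum_right[OF R_lin])
  finally have "cinner e (R y) *\<^sub>C e = c *\<^sub>C r"
    using q by (simp add: e_def scaleC_scaleC scaleR_scaleC)
  then show ?thesis using res by (simp add: ext(2))
qed

text \<open>Gram--Schmidt for a positive semi-definite form: after adding one more vector, either its
  residual is null, or its normalized residual extends the orthonormal family.\<close>
lemma gram_schmidt_wrt_step:
  assumes R: "pos_semidef R" and h: "orthonormal_wrt R m h"
    and null: "\<And>c. let z = residual_wrt R m h (\<Sum>i<n. c i *\<^sub>C v i) in cinner z (R z) = 0"
  shows "\<exists>m' h'. orthonormal_wrt R m' h' \<and>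
    (\<forall>c. let z = residual_wrt R m' h' (\<Sum>i<Suc n. c i *\<^sub>C v i) in cinner z (R z) = 0)"
proof -
  have R_lin: "bounded_clinear R" using R by (rule pos_semidef_bounded_clinear)
  define r where "r = residual_wrt R m h (v n)"
  have split: "residual_wrt R m h (\<Sum>i<Suc n. c i *\<^sub>C v i)
      = residual_wrt R m h (\<Sum>i<n. c i *\<^sub>C v i) + c n *\<^sub>C r" for c
    by (simp add: residual_wrt_add_scaleC[OF R_lin] r_def)
  have z_null: "cinner (residual_wrt R m h (\<Sum>i<n. c i *\<^sub>C v i))
      (R (residual_wrt R m h (\<Sum>i<n. c i *\<^sub>C v i))) = 0" for c
    using null[of c] by (simp add: Let_def)
  show ?thesis
  proof (cases "cinner r (R r) = 0")
    case True
    then have "let z = residual_wrt R m h (\<Sum>i<Suc n. c i *\<^sub>C v i) in cinner z (R z) = 0" for c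
      unfolding Let_def split by (intro pos_semidef_null_add_scaleC[OF R z_null])
    then show ?thesis using h by blast
  next
    case False
    then have q: "Re (cinner r (R r)) > 0"
      using pos_semidef_real[OF R, of r] pos_semidef_nonneg[OF R, of r]
      by (metis less_eq_real_def of_real_0)
    define e where "e = (1 / sqrt (Re (cinner r (R r)))) *\<^sub>R r"
    have "residual_wrt R (Suc m) (h(m := e)) (\<Sum>i<Suc n. c i *\<^sub>C v i)
        = residual_wrt R m h (\<Sum>i<n. c i *\<^sub>C v i)" for c
      unfolding e_def by (rule residual_wrt_extend[OF R h r_def q split z_null])
    then show ?thesis
      using orthonormal_wrt_extend(1)[OF R h r_def q] null
      by (intro exI[of _ "Suc m"] exI[of _ "h(m := e)"]) (simp add: e_def)
  qed
qed

lemma gram_schmidt_wrt: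
  fixes n :: nat and v :: "nat \<Rightarrow> 'a::complex_inner"
  assumes R: "pos_semidef R"
  shows "\<exists>m h. orthonormal_wrt R m h \<and>
    (\<forall>c. let z = residual_wrt R m h (\<Sum>i<n. c i *\<^sub>C v i) in cinner z (R z) = 0)"
proof (induction n)
  case 0
  have "orthonormal_wrt R 0 h" for h by (simp add: orthonormal_wrt_def)
  then show ?case
    by (auto simp: residual_wrt_def bounded_clinear_zero[OF pos_semidef_bounded_clinear[OF R]])
next
  case (Suc n)
  then show ?case using gram_schmidt_wrt_step[OF R] by (metis (no_types))
qed

lemma sum_delta_scaleC:
  fixes v :: "nat \<Rightarrow> 'a::complex_vector"
  assumes "i < n"
  shows "(\<Sum>i'<n. (if i' = i then 1 else 0) *\<^sub>C v i') = v i"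
proof -
  have "(\<Sum>i'<n. (if i' = i then 1 else 0) *\<^sub>C v i') = (\<Sum>i'<n. if i' = i then v i else 0)"
    by (intro sum.cong) auto
  also have "\<dots> = v i" using assms by simp
  finally show ?thesis .
qed

lemma orthonormal_basis_of_span:
  fixes v :: "nat \<Rightarrow> 'a::complex_inner"
  shows "\<exists>m g. orthonormal_fam m g \<and> (\<forall>i<n. v i = (\<Sum>k<m. cinner (g k) (v i) *\<^sub>C g k))"
proof -
  obtain m g where g: "orthonormal_wrt id m g"
    and null: "\<And>c. let z = residual_wrt id m g (\<Sum>i<n. c i *\<^sub>C v i) in cinner z (id z) = 0"
    using gram_schmidt_wrt[OF pos_semidef_id, where n=n and v=v] by blast
  have "v i = (\<Sum>k<m. cinner (g k) (v i) *\<^sub>C g k)" if i: "i < n" for i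
  proof -
    have "residual_wrt id m g (v i) = 0"
      using null[of "\<lambda>i'. if i' = i then 1 else 0"]
      by (simp add: Let_def sum_delta_scaleC[OF i] cinner_eq_zero_iff)
    then show ?thesis by (simp add: residual_wrt_def)
  qed
  then show ?thesis using g by (auto simp: orthonormal_wrt_id)
qed

lemma pos_semidef_parseval_on_span:
  fixes m :: nat and g :: "nat \<Rightarrow> 'a::complex_inner"
  assumes R: "pos_semidef R"
  shows "\<exists>r h. orthonormal_wrt R r h \<and> (\<forall>c.
    Re (cinner (\<Sum>k<m. c k *\<^sub>C g k) (R (\<Sum>k<m. c k *\<^sub>C g k)))
      = (\<Sum>j<r. (cmod (cinner (h j) (R (\<Sum>k<m. c k *\<^sub>C g k))))\<^sup>2))"
proof -
  obtain r h where h: "orthonormal_wrt R r h"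
    and null: "\<And>c. let z = residual_wrt R r h (\<Sum>k<m. c k *\<^sub>C g k) in cinner z (R z) = 0"
    using gram_schmidt_wrt[OF R, where n=m and v=g] by blast
  show ?thesis using h parseval_wrt[OF R h] null by (auto simp: Let_def)
qed

lemma trace_sum_le_trace_norm:
  assumes "trace_class T" "orthonormal_fam n e" "orthonormal_fam n f"
  shows "(\<Sum>i<n. cmod (cinner (f i) (T (e i)))) \<le> trace_norm T"
  using assms unfolding trace_class_def trace_norm_def
  by (intro cSup_upper) (auto simp: trace_sums_def)

lemma cinner_expansion:
  assumes "v = (\<Sum>k<m. cinner (g k) v *\<^sub>C g k)"
  shows "cinner w v = cinner (\<Sum>k<m. cinner (g k) w *\<^sub>C g k) v"
proof -
  have "cinner w v = cinner w (\<Sum>k<m. cinner (g k) v *\<^sub>C g k)"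
    using arg_cong[OF assms, of "cinner w"] .
  also have "\<dots> = cinner (\<Sum>k<m. cinner (g k) w *\<^sub>C g k) v"
    by (simp add: cinner_sum_left cinner_sum_right cinner_scaleC_left cinner_scaleC_right
        mult.commute flip: cinner_commute)
  finally show ?thesis .
qed

lemma norm_sq_orthonormal_expansion:
  assumes "orthonormal_fam m g"
  shows "(norm (\<Sum>k<m. cinner (g k) w *\<^sub>C g k))\<^sup>2 = (\<Sum>k<m. (cmod (cinner (g k) w))\<^sup>2)"
  using orthonormal_wrt_cinner_sum[OF bounded_clinear_id, of m g] assms
  by (simp add: orthonormal_wrt_id cinner_self_Re[symmetric] cnj_mult_self)

text \<open>With \<open>g\<^sub>k\<close> an orthonormal basis of the span of the \<open>v\<^sub>i\<close> and \<open>h\<^sub>j\<close> an orthonormal basis for the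
  form \<open>(x, Q y)\<close> on that span (playing the role of \<open>Q\<^sup>1\<^sup>/\<^sup>2\<close>), both sides are double sums of
  \<open>|(h\<^sub>j, Q x)|\<^sup>2\<close>, and the frame bound transfers from the \<open>v\<^sub>i\<close> to the \<open>g\<^sub>k\<close>.\<close>
lemma sum_quadratic_form_le_trace_norm:
  fixes v :: "nat \<Rightarrow> 'a::complex_inner"
  assumes Q: "pos_semidef Q" and tc: "trace_class Q" and c: "0 \<le> c"
    and frame: "\<And>z. (\<Sum>i<n. (cmod (cinner (v i) z))\<^sup>2) \<le> c * (norm z)\<^sup>2"
  shows "(\<Sum>i<n. Re (cinner (v i) (Q (v i)))) \<le> c * trace_norm Q"
proof -
  obtain m g where g: "orthonormal_fam m g"
    and v_exp: "\<And>i. i < n \<Longrightarrow> v i = (\<Sum>k<m. cinner (g k) (v i) *\<^sub>C g k)"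
    using orthonormal_basis_of_span by blast
  obtain r :: nat and h where h_parseval: "\<forall>c. Re (cinner (\<Sum>k<m. c k *\<^sub>C g k) (Q (\<Sum>k<m. c k *\<^sub>C g k)))
      = (\<Sum>j<r. (cmod (cinner (h j) (Q (\<Sum>k<m. c k *\<^sub>C g k))))\<^sup>2)"
    using pos_semidef_parseval_on_span[OF Q, where m=m and g=g] by blast
  have v_parseval: "Re (cinner (v i) (Q (v i))) = (\<Sum>j<r. (cmod (cinner (h j) (Q (v i))))\<^sup>2)"
    if "i < n" for i
    using h_parseval[rule_format, of "\<lambda>k. cinner (g k) (v i)"] v_exp[OF that] by simp
  have g_parseval: "Re (cinner (g k) (Q (g k))) = (\<Sum>j<r. (cmod (cinner (h j) (Q (g k))))\<^sup>2)"
    if "k < m" for k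
    using h_parseval[rule_format, of "\<lambda>k'. if k' = k then 1 else 0"]
    by (simp add: sum_delta_scaleC[OF that])
  define P where "P = (\<lambda>w. \<Sum>k<m. cinner (g k) w *\<^sub>C g k)"
  have cinner_P: "cinner w (v i) = cinner (P w) (v i)" if "i < n" for w i
    unfolding P_def by (rule cinner_expansion[OF v_exp[OF that]])
  have norm_P: "(norm (P w))\<^sup>2 = (\<Sum>k<m. (cmod (cinner (g k) w))\<^sup>2)" for w
    unfolding P_def by (rule norm_sq_orthonormal_expansion[OF g])
  have "(\<Sum>i<n. Re (cinner (v i) (Q (v i)))) = (\<Sum>j<r. \<Sum>i<n. (cmod (cinner (v i) (P (Q (h j)))))\<^sup>2)"
  proof (subst sum.swap, intro sum.cong refl)
    fix i assume i: "i \<in> {..<n}"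
    have "cinner (h j) (Q (v i)) = cnj (cinner (v i) (P (Q (h j))))" for j
      using pos_semidef_sym[OF Q, of "h j" "v i"] cinner_P[of i "Q (h j)"] i
      by (simp flip: cinner_commute)
    then show "Re (cinner (v i) (Q (v i))) = (\<Sum>j<r. (cmod (cinner (v i) (P (Q (h j)))))\<^sup>2)"
      using v_parseval i by simp
  qed
  also have "\<dots> \<le> (\<Sum>j<r. c * (\<Sum>k<m. (cmod (cinner (g k) (Q (h j))))\<^sup>2))"
    by (intro sum_mono) (simp only: norm_P[symmetric], rule frame)
  also have "\<dots> = c * (\<Sum>j<r. \<Sum>k<m. (cmod (cinner (h j) (Q (g k))))\<^sup>2)"
  proof -
    have "(cmod (cinner (g k) (Q (h j))))\<^sup>2 = (cmod (cinner (h j) (Q (g k))))\<^sup>2" for j k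
      using pos_semidef_cnj[OF Q, of "g k" "h j"] by (metis complex_mod_cnj)
    then show ?thesis by (simp add: sum_distrib_left)
  qed
  also have "\<dots> = c * (\<Sum>k<m. Re (cinner (g k) (Q (g k))))"
    by (subst sum.swap) (simp add: g_parseval)
  also have "\<dots> \<le> c * (\<Sum>k<m. cmod (cinner (g k) (Q (g k))))"
    by (intro mult_left_mono c sum_mono complex_Re_le_cmod)
  also have "\<dots> \<le> c * trace_norm Q"
    by (intro mult_left_mono c trace_sum_le_trace_norm tc g)
  finally show ?thesis .
qed

section \<open>The Riccati equation\<close>

lemma bounded_clinear_riccati_rhs:
  assumes "bounded_clinear Q" "bounded_clinear G" "bounded_clinear X"
  shows "bounded_clinear (\<lambda>x. Q x - X (G (X x)))"
  by (rule bounded_clinear_sub[OF assms(1) bounded_clinear_compose[OF assms(3)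
        bounded_clinear_compose[OF assms(2,3)]]])

context separable_exp_stable_semigroup
begin

text \<open>The integrand of the integral equation, tested against \<open>e\<^sub>i\<close>, is at most the quadratic form
  of \<open>Q\<close> at \<open>S\<^sup>*(t) e\<^sub>i\<close>; these vectors satisfy Bessel's inequality up to the factor
  \<open>\<parallel>S(t)\<parallel>\<^sup>2 \<le> M\<^sup>2 e\<^sup>-\<^sup>2\<^sup>\<alpha>\<^sup>t\<close>.\<close>
lemma sum_diag_riccati_integrand_le:
  assumes Q: "pos_semidef Q" and G: "pos_semidef G" and X: "pos_semidef X"
    and tc: "trace_class Q" and e: "orthonormal_fam n e" and t: "0 \<le> t"
  shows "(\<Sum>i<n. Re (cinner (e i) (S t (Q (S_adj t (e i)) - X (G (X (S_adj t (e i))))))))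
    \<le> M\<^sup>2 * trace_norm Q * exp (- (2 * \<alpha>) * t)"
proof -
  define v where "v = (\<lambda>i. S_adj t (e i))"
  define c where "c = (M * exp (- \<alpha> * t))\<^sup>2"
  have "Re (cinner (e i) (S t (Q (v i) - X (G (X (v i))))))
      = Re (cinner (v i) (Q (v i))) - Re (cinner (X (v i)) (G (X (v i))))" for i
    by (simp add: v_def cinner_S_adj[OF t, symmetric] cinner_diff_right pos_semidef_sym[OF X])
  then have "(\<Sum>i<n. Re (cinner (e i) (S t (Q (v i) - X (G (X (v i)))))))
      \<le> (\<Sum>i<n. Re (cinner (v i) (Q (v i))))"
    using pos_semidef_nonneg[OF G] by (intro sum_mono) simp
  also have "\<dots> \<le> c * trace_norm Q"
  proof (rule sum_quadratic_form_le_trace_norm[OF Q tc])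
    fix z
    have "(\<Sum>i<n. (cmod (cinner (v i) z))\<^sup>2) = (\<Sum>i<n. (cmod (cinner (e i) (S t z)))\<^sup>2)"
      by (simp add: v_def cinner_S_adj[OF t])
    also have "\<dots> \<le> (norm (S t z))\<^sup>2" by (rule bessel_inequality[OF e])
    also have "\<dots> \<le> c * (norm z)\<^sup>2"
      using power_mono[OF norm_S_le[OF t, of z]] by (simp add: c_def power_mult_distrib)
    finally show "(\<Sum>i<n. (cmod (cinner (v i) z))\<^sup>2) \<le> c * (norm z)\<^sup>2" .
  qed (simp add: c_def)
  also have "c = M\<^sup>2 * exp (- (2 * \<alpha>) * t)"
    by (simp add: c_def power_mult_distrib flip: exp_of_nat_mult)
  finally show ?thesis by (simp add: v_def algebra_simps)
qed

lemma sum_diag_integral_solution_le: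
  assumes Q: "pos_semidef Q" and G: "pos_semidef G" and X: "pos_semidef X"
    and X_sol: "riccati_integral_eq S Q G X" and tc: "trace_class Q" and e: "orthonormal_fam n e"
  shows "(\<Sum>i<n. Re (cinner (e i) (X (e i)))) \<le> M\<^sup>2 / (2 * \<alpha>) * trace_norm Q"
proof -
  define f where "f = (\<lambda>t. \<Sum>i<n. Re (cinner (e i) (S t (Q (S_adj t (e i)) - X (G (X (S_adj t (e i))))))))"
  define b where "b = (\<lambda>t. M\<^sup>2 * trace_norm Q * exp (- (2 * \<alpha>) * t))"
  have f_int: "has_bochner_integral (lebesgue_on {0..}) f (\<Sum>i<n. Re (cinner (e i) (X (e i))))"
    unfolding f_def using X_sol
    by (intro has_bochner_integral_sum has_bochner_integral_bounded_linear
        [OF bounded_linear_compose[OF bounded_linear_Re bounded_linear_cinner_right]])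
      (simp add: riccati_integral_eq_def)
  have b_int: "has_bochner_integral (lebesgue_on {0..}) b (M\<^sup>2 * trace_norm Q / (2 * \<alpha>))"
    unfolding b_def using \<alpha>_pos by (intro has_bochner_integral_exp_decay) simp
  have "(\<Sum>i<n. Re (cinner (e i) (X (e i)))) = integral\<^sup>L (lebesgue_on {0..}) f"
    using f_int by (simp add: has_bochner_integral_integral_eq)
  also have "\<dots> \<le> integral\<^sup>L (lebesgue_on {0..}) b"
  proof (rule integral_mono)
    show "integrable (lebesgue_on {0..}) f" using f_int by (rule integrable.intros)
    show "integrable (lebesgue_on {0..}) b" using b_int by (rule integrable.intros)
    show "f t \<le> b t" if "t \<in> space (lebesgue_on {0..})" for t
      using that sum_diag_riccati_integrand_le[OF Q G X tc e] by (simp add: f_def b_def)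
  qed
  also have "\<dots> = M\<^sup>2 / (2 * \<alpha>) * trace_norm Q"
    using b_int by (simp add: has_bochner_integral_integral_eq)
  finally show ?thesis .
qed

lemma trace_class_integral_solution:
  assumes Q: "pos_semidef Q" and G: "pos_semidef G" and X: "pos_semidef X"
    and X_sol: "riccati_integral_eq S Q G X" and tc: "trace_class Q"
  shows "trace_class X \<and> trace_norm X \<le> M\<^sup>2 / (2 * \<alpha>) * trace_norm Q"
proof -
  define B where "B = M\<^sup>2 / (2 * \<alpha>) * trace_norm Q"
  have le_B: "s \<le> B" if s_mem: "s \<in> trace_sums X" for s
  proof -
    obtain n e f where s: "s = (\<Sum>i<n. cmod (cinner (f i) (X (e i))))"
      and e: "orthonormal_fam n e" and f: "orthonormal_fam n f"
      using s_mem unfolding trace_sums_def by blast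
    have "s \<le> (\<Sum>i<n. (Re (cinner (e i) (X (e i))) + Re (cinner (f i) (X (f i)))) / 2)"
      unfolding s by (intro sum_mono cmod_cinner_pos_semidef_le[OF X])
    also have "\<dots> = ((\<Sum>i<n. Re (cinner (e i) (X (e i)))) + (\<Sum>i<n. Re (cinner (f i) (X (f i))))) / 2"
      by (simp only: sum.distrib[symmetric] sum_divide_distrib[symmetric])
    also have "\<dots> \<le> (B + B) / 2"
      using sum_diag_integral_solution_le[OF Q G X X_sol tc] e f
      by (intro divide_right_mono add_mono) (simp_all add: B_def)
    finally show ?thesis by simp
  qed
  have "0 \<in> trace_sums X"
    unfolding trace_sums_def by (rule CollectI, rule exI[of _ 0]) (simp add: orthonormal_fam_def)
  then have "trace_norm X \<le> B"
    unfolding trace_norm_def using le_B by (intro cSup_least) auto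
  moreover have "bdd_above (trace_sums X)" using le_B by (rule bdd_aboveI)
  ultimately show ?thesis
    using pos_semidef_bounded_clinear[OF X] by (simp add: trace_class_def B_def)
qed

lemma strong_riccati_eq_if_integral_eq:
  assumes Q: "pos_semidef Q" and G: "pos_semidef G" and X: "pos_semidef X"
    and X_sol: "riccati_integral_eq S Q G X"
    and gen: "is_generator S D A" and gen_adj: "is_generator S_adj Ds As"
  shows "strong_riccati_eq S D A Ds As Q G X"
proof -
  have Q_lin: "bounded_clinear Q" and G_lin: "bounded_clinear G" and X_lin: "bounded_clinear X"
    using Q G X by (simp_all add: pos_semidef_bounded_clinear)
  define Z where "Z = (\<lambda>x. X (G (X x)) - Q x)"
  have "bounded_clinear Z"
    unfolding Z_def
    by (rule bounded_clinear_sub[OF bounded_clinear_compose[OF X_lin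
          bounded_clinear_compose[OF G_lin X_lin]] Q_lin])
  moreover have "cinner (Z x) y = cinner x (Z y)" for x y
    by (simp add: Z_def cinner_diff_left cinner_diff_right pos_semidef_sym[OF X]
        pos_semidef_sym[OF G] pos_semidef_sym[OF Q])
  ultimately have "symmetric_op Z" by (simp add: symmetric_op_def)
  moreover have Z_lim: "((\<lambda>h. (1/h) *\<^sub>R (S h (X (S_adj h \<phi>)) - X \<phi>)) \<longlongrightarrow> Z \<phi>) (at_right 0)" for \<phi>
    using tendsto_conjugation_integral_diff_quotient[OF bounded_clinear_riccati_rhs[OF
        Q_lin G_lin X_lin]] X_sol
    by (simp add: riccati_integral_eq_def Z_def)
  moreover have "X \<phi> \<in> D \<and> A (X \<phi>) + X (As \<phi>) = Z \<phi>" if "\<phi> \<in> Ds" for \<phi>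
  proof -
    have "((\<lambda>h. (1/h) *\<^sub>R (S_adj h \<phi> - \<phi>)) \<longlongrightarrow> As \<phi>) (at_right 0)"
      using gen_adj that unfolding is_generator_def by blast
    from tendsto_diff_quotient_image[OF X_lin Z_lim this]
    have lim: "((\<lambda>h. (1/h) *\<^sub>R (S h (X \<phi>) - X \<phi>)) \<longlongrightarrow> Z \<phi> - X (As \<phi>)) (at_right 0)" .
    then have "X \<phi> \<in> D" using gen unfolding is_generator_def by blast
    moreover from this have "A (X \<phi>) = Z \<phi> - X (As \<phi>)"
      using gen lim tendsto_unique[OF trivial_limit_at_right_real] unfolding is_generator_def by blast
    ultimately show ?thesis by simp
  qed
  ultimately show ?thesis unfolding strong_riccati_eq_def by (intro exI[of _ Z]) (simp add: Z_def)
qed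

lemma integral_eq_if_strong_riccati_eq:
  assumes Q: "pos_semidef Q" and G: "pos_semidef G" and Y: "pos_semidef Y"
    and Y_sol: "strong_riccati_eq S D A Ds As Q G Y"
  shows "riccati_integral_eq S Q G Y"
proof -
  have Y_lin: "bounded_clinear Y" using Y by (rule pos_semidef_bounded_clinear)
  obtain Z where Z_lim: "\<And>\<phi>. ((\<lambda>h. (1/h) *\<^sub>R (S h (Y (S_adj h \<phi>)) - Y \<phi>)) \<longlongrightarrow> Z \<phi>) (at_right 0)"
    and Z_eq: "\<And>\<phi>. Z \<phi> - Y (G (Y \<phi>)) + Q \<phi> = 0"
    using Y_sol unfolding strong_riccati_eq_def by blast
  have "Z \<phi> = - (Q \<phi> - Y (G (Y \<phi>)))" for \<phi>
    using Z_eq[of \<phi>] by (simp add: algebra_simps eq_neg_iff_add_eq_0)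
  then show ?thesis
    using has_bochner_integral_conjugation_if_diff_quotient[OF bounded_clinear_riccati_rhs[OF
        pos_semidef_bounded_clinear[OF Q] pos_semidef_bounded_clinear[OF G] Y_lin] Y_lin] Z_lim
    by (simp add: riccati_integral_eq_def)
qed

end

theorem theorem1:
  fixes S :: "real \<Rightarrow> 'h::{chilbert_space, second_countable_topology} \<Rightarrow> 'h"
    and D Ds :: "'h set" and A As :: "'h \<Rightarrow> 'h"
    and Q G X :: "'h \<Rightarrow> 'h" and M \<alpha> :: real
  assumes semigroup: "c0_semigroup S"
    and gen: "is_generator S D A"
    and gen_adj: "is_generator (\<lambda>t. cadjoint (S t)) Ds As"
    and M_pos: "M > 0" and \<alpha>_pos: "\<alpha> > 0"
    and exp_stable: "\<forall>t\<ge>0. onorm (S t) \<le> M * exp (- \<alpha> * t)"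
    and Q_psd: "pos_semidef Q" and G_psd: "pos_semidef G"
    and X_psd: "pos_semidef X"
    and X_sol: "riccati_integral_eq S Q G X"
    and X_unique: "\<forall>Y. pos_semidef Y \<and> riccati_integral_eq S Q G Y \<longrightarrow> Y = X"
  shows "strong_riccati_eq S D A Ds As Q G X
         \<and> (\<forall>Y. pos_semidef Y \<and> strong_riccati_eq S D A Ds As Q G Y \<longrightarrow> Y = X)
         \<and> (trace_class Q \<longrightarrow>
              trace_class X \<and> trace_norm X \<le> M\<^sup>2 / (2 * \<alpha>) * trace_norm Q)"
proof -
  interpret separable_exp_stable_semigroup S M \<alpha>
    by unfold_locales (use semigroup M_pos \<alpha>_pos exp_stable in auto)
  show ?thesis
    using strong_riccati_eq_if_integral_eq[OF Q_psd G_psd X_psd X_sol gen gen_adj]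
      integral_eq_if_strong_riccati_eq[OF Q_psd G_psd] X_unique
      trace_class_integral_solution[OF Q_psd G_psd X_psd X_sol]
    by blast
qed

end
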